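(* Let $\phi$ be a real function on finite strings over $\{1,\dots,k_0\}$ that is increasing, i.e. $\phi(u)\le\phi(w)$ whenever $u$ is a contiguous substring of $w$. For the stationary mean $\mu$ of the RHA process and all $n\ge1$, $j\ge1$, $$\mathbb E_P\,\phi(X^{n-1}_j)\le\mathbb E_\mu\,\phi(\xi_{1:2^n})\le\mathbb E_P\,\phi(X^{n+1}_j).$$
   Context: Random hierarchical association (RHA) process. Fix positive integers $(k_n)_{n\ge0}$ (perplexities) with $k_{n-1}\le k_n\le k_{n-1}^2$ for all $n\ge1$. On a probability space $(\Omega,\mathcal J,P)$ let, for each $n\ge1$, $(L_{nj},R_{nj})_{j=1}^{k_n}$ be the lexicographically sorted enumeration of a uniformly random $k_n$-element subset of $\{1,\dots,k_{n-1}\}^2$ (each of the $\binom{k_{n-1}^2}{k_n}$ subsets equally likely), independently over $n$. Let $(C_n)_{n\ge0}$ be independent, independent of all $(L_{nj},R_{nj})$, with $C_n$ uniform on $\{1,\dots,k_n\}$. Define strings $Y^0_j=j$ (length 1) for $1\le j\le k_0$ and $Y^n_j=Y^{n-1}_{L_{nj}}Y^{n-1}_{R_{nj}}$ (concatenation). The RHA process is $\mathcal X=Y^0_{C_0}Y^1_{C_1}Y^2_{C_2}\cdots=X_1X_2X_3\cdots$, $X_{k:l}=X_k\cdots X_l$; for $n\ge0$, $j\ge1$, $X^n_j=X_{j2^n:(j+1)2^n-1}$. The limits $\mu(x_{1:m})=\lim_{N\to\infty}\frac1N\sum_{i=1}^NP(X_{i:i+m-1}=x_{1:m})$ exist and define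 a stationary probability measure $\mu$ on $\{1,\dots,k_0\}^{\mathbb N}$ (the stationary mean), with coordinate maps $\xi_i$. *)

theory Defs
  imports "HOL-Probability.Probability" "HOL-Library.Sublist"
begin

text \<open>Sample points: \<open>\<omega> n = (S_n, C_n)\<close>, where \<open>S_n\<close> is the random \<open>k_n\<close>-element
subset of \<open>{1..k_(n-1)}^2\<close> (unused, set to empty, for \<open>n = 0\<close>) and \<open>C_n\<close> is uniform
on \<open>{1..k_n}\<close>.\<close>

definition rha_level_pmf :: "(nat \<Rightarrow> nat) \<Rightarrow> nat \<Rightarrow> ((nat \<times> nat) set \<times> nat) pmf" where
  "rha_level_pmf k n =
     (if n = 0 then map_pmf (\<lambda>c. ({}, c)) (pmf_of_set {1..k 0})
      else pair_pmf
             (pmf_of_set {S. S \<subseteq> {1..k (n-1)} \<times> {1..k (n-1)} \<and> card S = k n})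
             (pmf_of_set {1..k n}))"

definition RHA_P :: "(nat \<Rightarrow> nat) \<Rightarrow> (nat \<Rightarrow> (nat \<times> nat) set \<times> nat) measure" where
  "RHA_P k = PiM UNIV (\<lambda>n. measure_pmf (rha_level_pmf k n))"

definition rha_enum :: "nat \<Rightarrow> (nat \<times> nat) set \<Rightarrow> (nat \<times> nat) list" where
  "rha_enum K S = [(a, b). a \<leftarrow> [1..<K+1], b \<leftarrow> [1..<K+1], (a, b) \<in> S]"

text \<open>\<open>Y^n_j\<close> (indices \<open>j\<close> start at 1; \<open>(L_{nj}, R_{nj}) = rha_enum ... ! (j-1)\<close>).\<close>
fun rha_Y :: "(nat \<Rightarrow> nat) \<Rightarrow> (nat \<Rightarrow> (nat \<times> nat) set \<times> nat) \<Rightarrow> nat \<Rightarrow> nat \<Rightarrow> nat list" where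
  "rha_Y k \<omega> 0 j = [j]"
| "rha_Y k \<omega> (Suc n) j =
     (let p = rha_enum (k n) (fst (\<omega> (Suc n))) ! (j - 1)
      in rha_Y k \<omega> n (fst p) @ rha_Y k \<omega> n (snd p))"

text \<open>\<open>X_{a:b} = X_a \<dots> X_b\<close> (1-indexed) of \<open>Y^0_{C_0} Y^1_{C_1} \<dots>\<close>; the first \<open>b\<close>
blocks already have total length \<open>\<ge> b\<close>.\<close>
definition rha_Xseg :: "(nat \<Rightarrow> nat) \<Rightarrow> (nat \<Rightarrow> (nat \<times> nat) set \<times> nat) \<Rightarrow> nat \<Rightarrow> nat \<Rightarrow> nat list" where
  "rha_Xseg k \<omega> a b = drop (a - 1) (take b (concat (map (\<lambda>n. rha_Y k \<omega> n (snd (\<omega> n))) [0..<b])))"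

definition rha_Xblock :: "(nat \<Rightarrow> nat) \<Rightarrow> (nat \<Rightarrow> (nat \<times> nat) set \<times> nat) \<Rightarrow> nat \<Rightarrow> nat \<Rightarrow> nat list" where
  "rha_Xblock k \<omega> n j = rha_Xseg k \<omega> (j * 2 ^ n) ((j + 1) * 2 ^ n - 1)"

definition rha_mu :: "(nat \<Rightarrow> nat) \<Rightarrow> nat list \<Rightarrow> real" where
  "rha_mu k x = lim (\<lambda>N. (\<Sum>i = 1..N. measure (RHA_P k)
       {\<omega> \<in> space (RHA_P k). rha_Xseg k \<omega> i (i + length x - 1) = x}) / real N)"

definition rha_mu_expect :: "(nat \<Rightarrow> nat) \<Rightarrow> nat \<Rightarrow> (nat list \<Rightarrow> real) \<Rightarrow> real" where
  "rha_mu_expect k m f = (\<Sum>x \<in> {x. length x = m \<and> set x \<subseteq> {1..k 0}}. rha_mu k x * f x)"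

end

theory Submission
  imports Defs
begin

text \<open>
  Letter \<open>p 2\<^sup>n + r\<close> (\<open>p \<ge> 1\<close>, \<open>r < 2\<^sup>n\<close>) of the process is letter \<open>r\<close> of \<open>Y\<^sup>n\<close> at the label of
  node \<open>p\<close> on level \<open>n\<close> of a binary tree, whose children \<open>2q\<close>, \<open>2q + 1\<close> carry the pair \<open>(L, R)\<close>
  selected by the label of \<open>q\<close> one level up. Since these pairs enumerate a uniformly random
  subset of \<open>{1..k\<^sub>n}\<^sup>2\<close>, uniform labels one level up make the labels of two adjacent nodes
  uniform on \<open>{1..k\<^sub>n}\<^sup>2\<close> again, both for siblings and for neighbours with different parents;
  by induction over the common ancestor, any two adjacent labels on level \<open>n\<close> are uniform and
  independent of the subsets on levels \<open>\<le> n\<close>.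

  A window \<open>X\<^bsub>i:i+2\<^sup>n-1\<^esub>\<close> with \<open>i \<ge> 2\<^sup>n\<close> lies inside \<open>Y\<^sup>n\<^sub>a Y\<^sup>n\<^sub>b\<close> for two adjacent labels
  \<open>a\<close>, \<open>b\<close>, so its law depends only on \<open>i mod 2\<^sup>n\<close>, and \<open>\<mu>\<close> on words of length \<open>2\<^sup>n\<close> is the
  average of these laws over one period. Each such window contains an aligned block, which is
  distributed like \<open>X\<^sup>n\<^sup>-\<^sup>1\<^sub>j\<close>, and is contained in \<open>Y\<^sup>n\<^sub>a Y\<^sup>n\<^sub>b\<close>, which is distributed like
  \<open>X\<^sup>n\<^sup>+\<^sup>1\<^sub>j\<close>; monotonicity of \<open>\<phi>\<close> gives the two bounds.
\<close>

lemma expectation_pmf_cong: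
  "(\<And>x. x \<in> set_pmf p \<Longrightarrow> f x = g x) \<Longrightarrow> measure_pmf.expectation p f = measure_pmf.expectation p g"
  by (intro integral_cong_AE AE_pmfI) simp_all

lemma expectation_finite_pmf:
  fixes f :: "'a \<Rightarrow> real"
  shows "finite (set_pmf M) \<Longrightarrow> measure_pmf.expectation M f = (\<Sum>x\<in>set_pmf M. pmf M x * f x)"
  by (subst integral_measure_pmf_real) (auto simp: mult.commute)

lemma expectation_pair_pmf:
  fixes f :: "'a \<times> 'b \<Rightarrow> real"
  assumes "finite (set_pmf A)" "finite (set_pmf B)"
  shows "measure_pmf.expectation (pair_pmf A B) f
       = measure_pmf.expectation A (\<lambda>a. measure_pmf.expectation B (\<lambda>b. f (a, b)))"
proof -
  have "measure_pmf.expectation (pair_pmf A B) f = (\<Sum>x\<in>set_pmf A \<times> set_pmf B. pmf (pair_pmf A B) x * f x)"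
    using assms by (simp add: expectation_finite_pmf)
  also have "\<dots> = (\<Sum>a\<in>set_pmf A. \<Sum>b\<in>set_pmf B. pmf A a * (pmf B b * f (a, b)))"
  proof -
    have "pmf (pair_pmf A B) x = pmf A (fst x) * pmf B (snd x)" for x
      by (cases x) (simp add: pmf_pair)
    then show ?thesis by (simp add: sum.cartesian_product case_prod_beta mult.assoc)
  qed
  also have "\<dots> = measure_pmf.expectation A (\<lambda>a. measure_pmf.expectation B (\<lambda>b. f (a, b)))"
    using assms by (simp add: expectation_finite_pmf sum_distrib_left)
  finally show ?thesis .
qed

lemma expectation_pmf_swap:
  fixes g :: "'a \<Rightarrow> 'b \<Rightarrow> real"
  assumes "finite (set_pmf A)" "finite (set_pmf B)"
  shows "measure_pmf.expectation A (\<lambda>a. measure_pmf.expectation B (\<lambda>b. g a b))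
       = measure_pmf.expectation B (\<lambda>b. measure_pmf.expectation A (\<lambda>a. g a b))"
  using assms by (simp add: expectation_finite_pmf sum_distrib_left sum.swap[of _ "set_pmf A"]
      mult.left_commute)

lemma finite_set_Pi_pmf:
  "finite A \<Longrightarrow> (\<And>i. finite (set_pmf (p i))) \<Longrightarrow> finite (set_pmf (Pi_pmf A d p))"
  by (subst set_Pi_pmf) (auto intro!: finite_PiE_dflt)

lemma expectation_Pi_pmf_resample:
  fixes F :: "('i \<Rightarrow> 'b) \<Rightarrow> real"
  assumes A: "finite A" "m \<in> A" and fin: "\<And>i. finite (set_pmf (p i))"
  shows "measure_pmf.expectation (Pi_pmf A d p) F
       = measure_pmf.expectation (Pi_pmf A d p) (\<lambda>w. measure_pmf.expectation (p m) (\<lambda>x. F (w(m := x))))"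
proof -
  let ?B = "A - {m}"
  have "A = insert m ?B" using A by auto
  then have PI: "Pi_pmf A d p = map_pmf (\<lambda>(y, f). f(m := y)) (pair_pmf (p m) (Pi_pmf ?B d p))"
    using A by (metis Diff_iff Pi_pmf_insert finite_Diff singletonI)
  have finB: "finite (set_pmf (Pi_pmf ?B d p))" using A fin by (intro finite_set_Pi_pmf) auto
  have "measure_pmf.expectation (Pi_pmf A d p) F
      = measure_pmf.expectation (p m) (\<lambda>y. measure_pmf.expectation (Pi_pmf ?B d p) (\<lambda>f. F (f(m := y))))"
    unfolding PI by (simp add: expectation_pair_pmf[OF fin finB])
  also have "\<dots> = measure_pmf.expectation (Pi_pmf ?B d p) (\<lambda>f. measure_pmf.expectation (p m) (\<lambda>y. F (f(m := y))))"
    by (rule expectation_pmf_swap[OF fin finB])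
  also have "\<dots> = measure_pmf.expectation (Pi_pmf A d p) (\<lambda>w. measure_pmf.expectation (p m) (\<lambda>x. F (w(m := x))))"
    unfolding PI by (simp add: expectation_pair_pmf[OF fin finB])
  finally show ?thesis .
qed

lemma PiM_eq_distr_Pi_pmf:
  assumes fin: "finite J"
  shows "PiM J (\<lambda>i. measure_pmf (p i)) = distr (measure_pmf (Pi_pmf J d p)) (PiM J (\<lambda>i. measure_pmf (p i))) (\<lambda>f. restrict f J)"
proof (rule product_sigma_finite.PiM_eqI[symmetric])
  interpret product_prob_space "\<lambda>i. measure_pmf (p i)"
    by (intro product_prob_spaceI measure_pmf.prob_space_axioms)
  show "product_sigma_finite (\<lambda>i. measure_pmf (p i))" by unfold_locales
  fix A assume A: "\<And>i. i \<in> J \<Longrightarrow> A i \<in> sets (measure_pmf (p i))"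
  have "Pi\<^sub>E J A \<in> sets (PiM J (\<lambda>i. measure_pmf (p i)))"
    using A by (intro sets_PiM_I_finite fin) auto
  then have "emeasure (distr (measure_pmf (Pi_pmf J d p)) (PiM J (\<lambda>i. measure_pmf (p i))) (\<lambda>f. restrict f J)) (Pi\<^sub>E J A)
      = emeasure (measure_pmf (Pi_pmf J d p)) ((\<lambda>x. restrict x J) -` Pi\<^sub>E J A)"
    by (subst emeasure_distr) (auto simp: space_PiM)
  also have "\<dots> = emeasure (measure_pmf (Pi_pmf J d p)) (PiE_dflt J d A)"
    by (intro emeasure_eq_AE AE_pmfI) (auto simp: PiE_dflt_def set_Pi_pmf fin)
  also have "\<dots> = (\<Prod>i\<in>J. emeasure (measure_pmf (p i)) (A i))"
    by (simp add: measure_pmf.emeasure_eq_measure measure_Pi_pmf_PiE_dflt fin prod_ennreal)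
  finally show "emeasure (distr (measure_pmf (Pi_pmf J d p)) (PiM J (\<lambda>i. measure_pmf (p i))) (\<lambda>f. restrict f J)) (Pi\<^sub>E J A)
      = (\<Prod>i\<in>J. emeasure (measure_pmf (p i)) (A i))" .
qed (simp_all add: fin)

section \<open>Uniform random subsets\<close>

lemma card_subsets_containing:
  assumes "finite U" "x \<in> U" "1 \<le> kk"
  shows "card {S. S \<subseteq> U \<and> card S = kk \<and> x \<in> S} = (card U - 1) choose (kk - 1)"
proof -
  have "bij_betw (insert x) {T. T \<subseteq> U - {x} \<and> card T = kk - 1} {S. S \<subseteq> U \<and> card S = kk \<and> x \<in> S}"
  proof (rule bij_betw_byWitness[where f'="\<lambda>S. S - {x}"])
    show "insert x ` {T. T \<subseteq> U - {x} \<and> card T = kk - 1} \<subseteq> {S. S \<subseteq> U \<and> card S = kk \<and> x \<in> S}"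
      using assms by (auto simp: card_insert_if finite_subset)
    show "(\<lambda>S. S - {x}) ` {S. S \<subseteq> U \<and> card S = kk \<and> x \<in> S} \<subseteq> {T. T \<subseteq> U - {x} \<and> card T = kk - 1}"
      using assms by (auto simp: finite_subset)
  qed auto
  then have "card {S. S \<subseteq> U \<and> card S = kk \<and> x \<in> S} = card (U - {x}) choose (kk - 1)"
    using assms by (simp add: bij_betw_same_card[symmetric] n_subsets)
  then show ?thesis using assms by simp
qed

lemma card_subsets_containing_two:
  assumes "finite U" "x \<in> U" "y \<in> U" "x \<noteq> y" "2 \<le> kk"
  shows "card {S. S \<subseteq> U \<and> card S = kk \<and> x \<in> S \<and> y \<in> S} = (card U - 2) choose (kk - 2)"
proof -
  have "bij_betw (\<lambda>T. insert x (insert y T)) {T. T \<subseteq> U - {x, y} \<and> card T = kk - 2}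
          {S. S \<subseteq> U \<and> card S = kk \<and> x \<in> S \<and> y \<in> S}"
  proof (rule bij_betw_byWitness[where f'="\<lambda>S. S - {x, y}"])
    show "(\<lambda>T. insert x (insert y T)) ` {T. T \<subseteq> U - {x, y} \<and> card T = kk - 2}
        \<subseteq> {S. S \<subseteq> U \<and> card S = kk \<and> x \<in> S \<and> y \<in> S}"
      using assms by (auto simp: card_insert_if finite_subset)
    show "(\<lambda>S. S - {x, y}) ` {S. S \<subseteq> U \<and> card S = kk \<and> x \<in> S \<and> y \<in> S}
        \<subseteq> {T. T \<subseteq> U - {x, y} \<and> card T = kk - 2}"
      using assms by (auto simp: finite_subset card_Diff_subset)
  qed auto
  then have "card {S. S \<subseteq> U \<and> card S = kk \<and> x \<in> S \<and> y \<in> S} = card (U - {x, y}) choose (kk - 2)"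
    using assms by (simp add: bij_betw_same_card[symmetric] n_subsets)
  then show ?thesis using assms by (simp add: card_Diff_subset numeral_2_eq_2)
qed

lemma finite_subsets_card: "finite U \<Longrightarrow> finite {S. S \<subseteq> U \<and> card S = kk}"
  by (simp add: finite_subset[of _ "Pow U"] subset_eq)

lemma card_subsets_card: "finite U \<Longrightarrow> card {S. S \<subseteq> U \<and> card S = kk} = card U choose kk"
  by (simp add: n_subsets)

lemma subsets_card_nonempty: "finite U \<Longrightarrow> kk \<le> card U \<Longrightarrow> {S. S \<subseteq> U \<and> card S = kk} \<noteq> {}"
  using card_subsets_card[of U kk] by (metis binomial_eq_0_iff card.empty not_less)

lemma sum_family_of_subsets:
  fixes f :: "'a \<Rightarrow> real"
  assumes U: "finite U" and fin: "finite \<S>" and sub: "\<And>S. S \<in> \<S> \<Longrightarrow> S \<subseteq> U"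
  shows "(\<Sum>S\<in>\<S>. \<Sum>x\<in>S. f x) = (\<Sum>x\<in>U. real (card {S \<in> \<S>. x \<in> S}) * f x)"
proof -
  have "(\<Sum>S\<in>\<S>. \<Sum>x\<in>S. f x) = (\<Sum>S\<in>\<S>. \<Sum>x\<in>U. if x \<in> S then f x else 0)"
  proof (rule sum.cong[OF refl])
    fix S assume "S \<in> \<S>"
    then show "(\<Sum>x\<in>S. f x) = (\<Sum>x\<in>U. if x \<in> S then f x else 0)"
      using sum.inter_restrict[OF U, of f S] sub by (simp add: Int_absorb1)
  qed
  then show ?thesis
    by (subst (asm) sum.swap) (simp add: sum.If_cases[OF fin] Int_def)
qed

lemma double_sum_family_of_subsets:
  fixes g :: "'a \<Rightarrow> 'a \<Rightarrow> real"
  assumes U: "finite U" and fin: "finite \<S>" and sub: "\<And>S. S \<in> \<S> \<Longrightarrow> S \<subseteq> U"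
  shows "(\<Sum>S\<in>\<S>. \<Sum>x\<in>S. \<Sum>y\<in>S. g x y) = (\<Sum>x\<in>U. \<Sum>y\<in>U. real (card {S \<in> \<S>. x \<in> S \<and> y \<in> S}) * g x y)"
proof -
  have restrict: "(\<Sum>x\<in>S. h x) = (\<Sum>x\<in>U. if x \<in> S then h x else 0)" if "S \<in> \<S>" for S h
    using sum.inter_restrict[OF U, of h S] sub[OF that] by (simp add: Int_absorb1)
  have "(\<Sum>S\<in>\<S>. \<Sum>x\<in>S. \<Sum>y\<in>S. g x y) = (\<Sum>S\<in>\<S>. \<Sum>x\<in>U. \<Sum>y\<in>U. if x \<in> S \<and> y \<in> S then g x y else 0)"
  proof (rule sum.cong[OF refl])
    fix S assume S: "S \<in> \<S>"
    show "(\<Sum>x\<in>S. \<Sum>y\<in>S. g x y) = (\<Sum>x\<in>U. \<Sum>y\<in>U. if x \<in> S \<and> y \<in> S then g x y else 0)"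
      by (simp only: restrict[OF S]) (intro sum.cong refl; simp)
  qed
  also have "\<dots> = (\<Sum>x\<in>U. \<Sum>y\<in>U. \<Sum>S\<in>\<S>. if x \<in> S \<and> y \<in> S then g x y else 0)"
    by (subst sum.swap) (intro sum.cong refl sum.swap)
  finally show ?thesis by (simp add: sum.inter_filter[OF fin, symmetric])
qed

lemma card_subsets_containing_pair:
  assumes "finite U" "x \<in> U" "y \<in> U" "1 \<le> kk"
  shows "card {S. S \<subseteq> U \<and> card S = kk \<and> x \<in> S \<and> y \<in> S}
       = (if x = y then (card U - 1) choose (kk - 1) else if 2 \<le> kk then (card U - 2) choose (kk - 2) else 0)"
proof -
  consider "x = y" | "x \<noteq> y" "2 \<le> kk" | "x \<noteq> y" "kk = 1" using assms(4) by linarith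
  then show ?thesis
  proof cases
    case 1
    then show ?thesis using card_subsets_containing[OF assms(1,2,4)] by simp
  next
    case 2
    then show ?thesis using card_subsets_containing_two[OF assms(1-3) 2] by simp
  next
    case 3
    then have "{S. S \<subseteq> U \<and> card S = kk \<and> x \<in> S \<and> y \<in> S} = {}" by (auto simp: card_1_singleton_iff)
    then have "card {S. S \<subseteq> U \<and> card S = kk \<and> x \<in> S \<and> y \<in> S} = 0" by (simp only: card.empty)
    then show ?thesis using 3 by simp
  qed
qed

lemma expectation_subset_sum:
  fixes f :: "'a \<Rightarrow> real"
  assumes U: "finite U" and kk: "1 \<le> kk" "kk \<le> card U"
  shows "measure_pmf.expectation (pmf_of_set {S. S \<subseteq> U \<and> card S = kk}) (\<lambda>S. \<Sum>x\<in>S. f x)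
       = real kk / real (card U) * (\<Sum>x\<in>U. f x)"
proof -
  define \<S> where "\<S> = {S. S \<subseteq> U \<and> card S = kk}"
  define c1 where "c1 = (card U - 1) choose (kk - 1)"
  have fin: "finite \<S>" and ne: "\<S> \<noteq> {}" and card: "card \<S> = card U choose kk"
    unfolding \<S>_def using U kk finite_subsets_card subsets_card_nonempty card_subsets_card by auto
  have "card {S \<in> \<S>. x \<in> S} = c1" if "x \<in> U" for x
    using card_subsets_containing[OF U that kk(1)] unfolding \<S>_def c1_def by (simp add: conj_assoc)
  then have sum: "(\<Sum>S\<in>\<S>. \<Sum>x\<in>S. f x) = real c1 * (\<Sum>x\<in>U. f x)"
    using sum_family_of_subsets[OF U fin, of f] by (simp add: \<S>_def sum_distrib_left)
  have "card U * c1 = (card U choose kk) * kk"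
    using Suc_times_binomial_eq[of "card U - 1" "kk - 1"] kk unfolding c1_def by simp
  then have "real (card U) * real c1 = real (card \<S>) * real kk"
    unfolding card by (metis of_nat_mult)
  moreover have "card U > 0" "card \<S> > 0" using kk fin ne by auto
  ultimately show ?thesis
    using fin ne unfolding \<S>_def[symmetric] by (simp add: integral_pmf_of_set sum field_simps)
qed

text \<open>The hypothesis says that the diagonal of \<open>g\<close> has the same average as all of \<open>g\<close>; then
  the diagonal terms, which \<open>S\<close> hits more often than off-diagonal ones, do not bias the mean.\<close>
lemma expectation_subset_double_sum:
  fixes g :: "'a \<Rightarrow> 'a \<Rightarrow> real"
  assumes U: "finite U" and kk: "1 \<le> kk" "kk \<le> card U"
    and diagonal: "(\<Sum>x\<in>U. \<Sum>y\<in>U. g x y) = real (card U) * (\<Sum>x\<in>U. g x x)"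
  shows "measure_pmf.expectation (pmf_of_set {S. S \<subseteq> U \<and> card S = kk}) (\<lambda>S. \<Sum>x\<in>S. \<Sum>y\<in>S. g x y)
       = (real kk / real (card U))\<^sup>2 * (\<Sum>x\<in>U. \<Sum>y\<in>U. g x y)"
proof -
  define \<S> where "\<S> = {S. S \<subseteq> U \<and> card S = kk}"
  define N where "N = card U"
  define c1 where "c1 = (N - 1) choose (kk - 1)"
  define c2 where "c2 = (if 2 \<le> kk then (N - 2) choose (kk - 2) else 0)"
  define \<Delta> where "\<Delta> = (\<Sum>x\<in>U. g x x)"
  have fin: "finite \<S>" and ne: "\<S> \<noteq> {}" and card: "card \<S> = N choose kk"
    unfolding \<S>_def N_def using U kk finite_subsets_card subsets_card_nonempty card_subsets_card by auto
  have "(\<Sum>S\<in>\<S>. \<Sum>x\<in>S. \<Sum>y\<in>S. g x y)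
      = (\<Sum>x\<in>U. \<Sum>y\<in>U. real c2 * g x y + (if x = y then (real c1 - real c2) * g x y else 0))"
    using double_sum_family_of_subsets[OF U fin, of g] card_subsets_containing_pair[OF U _ _ kk(1)]
    by (auto simp: \<S>_def c1_def c2_def N_def conj_assoc algebra_simps intro!: sum.cong)
  also have "\<dots> = real c2 * (\<Sum>x\<in>U. \<Sum>y\<in>U. g x y) + (real c1 - real c2) * \<Delta>"
  proof -
    have "(\<Sum>x\<in>U. \<Sum>y\<in>U. if x = y then h x y else 0) = (\<Sum>x\<in>U. h x x)" for h :: "'a \<Rightarrow> 'a \<Rightarrow> real"
      by (intro sum.cong refl) (simp add: sum.delta'[OF U])
    then show ?thesis by (simp add: sum.distrib sum_distrib_left \<Delta>_def)
  qed
  also have "\<dots> = (real c2 * (real N - 1) + real c1) * \<Delta>"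
    unfolding diagonal[folded N_def \<Delta>_def] by (simp add: algebra_simps)
  also have "real c2 * (real N - 1) = real c1 * (real kk - 1)"
  proof (cases "2 \<le> kk")
    case True
    moreover have "2 \<le> N" using True kk unfolding N_def by linarith
    ultimately have "(N - 1) * c2 = c1 * (kk - 1)"
      using Suc_times_binomial_eq[of "N - 2" "kk - 2"] unfolding c1_def c2_def
      by (simp add: Suc_diff_Suc numeral_2_eq_2)
    then have "real (N - 1) * real c2 = real c1 * real (kk - 1)"
      by (simp only: of_nat_mult[symmetric])
    then show ?thesis using \<open>2 \<le> N\<close> kk by (simp add: of_nat_diff mult.commute)
  qed (use kk in \<open>simp add: c2_def\<close>)
  finally have sum: "(\<Sum>S\<in>\<S>. \<Sum>x\<in>S. \<Sum>y\<in>S. g x y) = real c1 * real kk * \<Delta>"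
    by (simp add: algebra_simps)
  have "N * c1 = (N choose kk) * kk"
    using Suc_times_binomial_eq[of "N - 1" "kk - 1"] kk unfolding c1_def N_def by simp
  then have "real c1 = real (card \<S>) * real kk / real N" and pos: "real N > 0" "real (card \<S>) > 0"
    using kk fin ne unfolding card N_def by (auto simp: field_simps simp flip: of_nat_mult)
  then have "measure_pmf.expectation (pmf_of_set \<S>) (\<lambda>S. \<Sum>x\<in>S. \<Sum>y\<in>S. g x y)
      = (real kk / real N)\<^sup>2 * (real N * \<Delta>)"
    using fin ne by (simp add: integral_pmf_of_set sum power2_eq_square)
  then show ?thesis
    unfolding \<S>_def diagonal[folded N_def \<Delta>_def] N_def .
qed

lemma rha_enum_eq_filter:
  "rha_enum K S = filter (\<lambda>x. x \<in> S) (List.product [1..<K+1] [1..<K+1])"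
proof -
  have row: "[(a, b). b \<leftarrow> ys, (a, b) \<in> S] = filter (\<lambda>x. x \<in> S) (map (Pair a) ys)" for a ys
    by (induction ys) auto
  have "[(a, b). a \<leftarrow> xs, b \<leftarrow> ys, (a, b) \<in> S] = filter (\<lambda>x. x \<in> S) (List.product xs ys)" for xs ys
    by (induction xs) (simp_all add: row)
  then show ?thesis unfolding rha_enum_def .
qed

lemma distinct_rha_enum: "distinct (rha_enum K S)"
  unfolding rha_enum_eq_filter by (intro distinct_filter distinct_product distinct_upt)

lemma set_rha_enum: "S \<subseteq> {1..K} \<times> {1..K} \<Longrightarrow> set (rha_enum K S) = S"
  unfolding rha_enum_eq_filter by auto

lemma length_rha_enum: "S \<subseteq> {1..K} \<times> {1..K} \<Longrightarrow> length (rha_enum K S) = card S"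
  using distinct_card[OF distinct_rha_enum] set_rha_enum by metis

lemma rha_enum_nth_mem:
  assumes "S \<subseteq> {1..K} \<times> {1..K}" "c \<in> {1..card S}"
  shows "rha_enum K S ! (c - 1) \<in> S"
  using assms length_rha_enum[OF assms(1)] set_rha_enum[OF assms(1)] by (metis atLeastAtMost_iff
      diff_less less_le_trans nth_mem zero_less_one)

lemma sum_rha_enum_nth:
  assumes "S \<subseteq> {1..K} \<times> {1..K}"
  shows "(\<Sum>c=1..card S. H (rha_enum K S ! (c - 1))) = (\<Sum>x\<in>S. H x)"
proof -
  have "(\<Sum>c=1..card S. H (rha_enum K S ! (c - 1))) = (\<Sum>i<card S. H (rha_enum K S ! i))"
    by (rule sum.reindex_bij_witness[of _ Suc "\<lambda>c. c - 1"]) auto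
  also have "\<dots> = sum_list (map H (rha_enum K S))"
    using length_rha_enum[OF assms] by (simp add: sum_list_sum_nth atLeast0LessThan)
  also have "\<dots> = (\<Sum>x\<in>S. H x)"
    using set_rha_enum[OF assms] by (simp add: sum_list_distinct_conv_sum_set distinct_rha_enum)
  finally show ?thesis .
qed

abbreviation grid_subsets :: "nat \<Rightarrow> nat \<Rightarrow> (nat \<times> nat) set set" where
  "grid_subsets K kk \<equiv> {S. S \<subseteq> {1..K} \<times> {1..K} \<and> card S = kk}"

definition grid_avg :: "nat \<Rightarrow> (nat \<Rightarrow> nat \<Rightarrow> real) \<Rightarrow> real" where
  "grid_avg K G = (\<Sum>a=1..K. \<Sum>b=1..K. G a b) / (real K * real K)"

lemma grid_subsets_nonempty: "kk \<le> K * K \<Longrightarrow> grid_subsets K kk \<noteq> {}"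
  by (intro subsets_card_nonempty) auto

lemma sum_grid: "(\<Sum>x\<in>{1..K} \<times> {1..K}. f (fst x) (snd x)) = (\<Sum>a=1..K. \<Sum>b=1..K. f a b)"
  by (simp add: sum.cartesian_product case_prod_beta)

lemma expectation_rha_enum_pairs:
  assumes "1 \<le> K" "1 \<le> kk" "kk \<le> K * K"
  shows "measure_pmf.expectation (pmf_of_set (grid_subsets K kk))
      (\<lambda>S. (\<Sum>c=1..kk. G (fst (rha_enum K S ! (c - 1))) (snd (rha_enum K S ! (c - 1)))) / real kk)
    = grid_avg K G"
proof -
  let ?U = "{1..K} \<times> {1..K}"
  have fin: "finite (grid_subsets K kk)" and ne: "grid_subsets K kk \<noteq> {}"
    using finite_subsets_card grid_subsets_nonempty assms by auto
  have "measure_pmf.expectation (pmf_of_set (grid_subsets K kk))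
      (\<lambda>S. (\<Sum>c=1..kk. G (fst (rha_enum K S ! (c - 1))) (snd (rha_enum K S ! (c - 1)))) / real kk)
    = measure_pmf.expectation (pmf_of_set (grid_subsets K kk)) (\<lambda>S. \<Sum>x\<in>S. G (fst x) (snd x)) / real kk"
  proof (simp only: integral_divide_zero[symmetric], rule expectation_pmf_cong)
    fix S assume "S \<in> set_pmf (pmf_of_set (grid_subsets K kk))"
    then have "S \<subseteq> ?U" "card S = kk" using fin ne by auto
    then show "(\<Sum>c=1..kk. G (fst (rha_enum K S ! (c - 1))) (snd (rha_enum K S ! (c - 1)))) / real kk
        = (\<Sum>x\<in>S. G (fst x) (snd x)) / real kk"
      using sum_rha_enum_nth[of S K "\<lambda>x. G (fst x) (snd x)"] by simp
  qed
  also have "\<dots> = real kk / real (K * K) * (\<Sum>x\<in>?U. G (fst x) (snd x)) / real kk"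
    using expectation_subset_sum[of ?U kk] assms by simp
  also have "\<dots> = grid_avg K G"
    unfolding grid_avg_def sum_grid using assms by simp
  finally show ?thesis .
qed

lemma sum_grid_cross:
  "(\<Sum>x\<in>{1..K} \<times> {1..K}. \<Sum>y\<in>{1..K} \<times> {1..K}. G (snd x) (fst y))
     = real K * real K * (\<Sum>a=1..K. \<Sum>b=1..K. G a b)"
proof -
  have fst: "(\<Sum>x\<in>{1..K} \<times> {1..K}. h (fst x)) = real K * (\<Sum>a=1..K. h a)" for h :: "nat \<Rightarrow> real"
    using sum_grid[where f="\<lambda>a b. h a"] by (simp add: sum_distrib_left mult.commute)
  have snd: "(\<Sum>x\<in>{1..K} \<times> {1..K}. h (snd x)) = real K * (\<Sum>a=1..K. h a)" for h :: "nat \<Rightarrow> real"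
    using sum_grid[where f="\<lambda>a b. h b"] by simp
  have "(\<Sum>x\<in>{1..K} \<times> {1..K}. \<Sum>y\<in>{1..K} \<times> {1..K}. G (snd x) (fst y))
      = (\<Sum>x\<in>{1..K} \<times> {1..K}. real K * (\<Sum>a=1..K. G (snd x) a))"
    by (intro sum.cong refl fst)
  also have "\<dots> = real K * (real K * (\<Sum>a=1..K. \<Sum>b=1..K. G a b))"
    using snd[of "\<lambda>b. real K * (\<Sum>a=1..K. G b a)"] by (simp add: sum_distrib_left)
  finally show ?thesis by simp
qed

lemma sum_grid_swap: "(\<Sum>x\<in>{1..K} \<times> {1..K}. G (snd x) (fst x)) = (\<Sum>a=1..K. \<Sum>b=1..K. G a b)"
  using sum_grid[where f="\<lambda>a b. G b a"] sum.swap[of "\<lambda>a b. G b a" "{1..K}" "{1..K}"] by simp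

text \<open>The right entry of one enumerated pair against the left entry of an independently chosen
  one: this is how the labels of adjacent nodes with different parents arise.\<close>
lemma expectation_rha_enum_cross_pairs:
  assumes "1 \<le> K" "1 \<le> kk" "kk \<le> K * K"
  shows "measure_pmf.expectation (pmf_of_set (grid_subsets K kk))
      (\<lambda>S. (\<Sum>c=1..kk. \<Sum>c'=1..kk. G (snd (rha_enum K S ! (c - 1))) (fst (rha_enum K S ! (c' - 1))))
        / (real kk * real kk))
    = grid_avg K G"
proof -
  let ?U = "{1..K} \<times> {1..K}"
  let ?T = "\<Sum>a=1..K. \<Sum>b=1..K. G a b"
  have fin: "finite (grid_subsets K kk)" and ne: "grid_subsets K kk \<noteq> {}"
    using finite_subsets_card grid_subsets_nonempty assms by auto
  have "measure_pmf.expectation (pmf_of_set (grid_subsets K kk))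
      (\<lambda>S. (\<Sum>c=1..kk. \<Sum>c'=1..kk. G (snd (rha_enum K S ! (c - 1))) (fst (rha_enum K S ! (c' - 1))))
        / (real kk * real kk))
    = measure_pmf.expectation (pmf_of_set (grid_subsets K kk))
        (\<lambda>S. \<Sum>x\<in>S. \<Sum>y\<in>S. G (snd x) (fst y)) / (real kk * real kk)"
  proof (simp only: integral_divide_zero[symmetric], rule expectation_pmf_cong)
    fix S assume "S \<in> set_pmf (pmf_of_set (grid_subsets K kk))"
    then have "S \<subseteq> ?U" "card S = kk" using fin ne by auto
    then have "(\<Sum>c'=1..kk. G (snd e) (fst (rha_enum K S ! (c' - 1)))) = (\<Sum>y\<in>S. G (snd e) (fst y))"
      for e :: "nat \<times> nat"
      using sum_rha_enum_nth[of S K "\<lambda>y. G (snd e) (fst y)"] by simp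
    then show "(\<Sum>c=1..kk. \<Sum>c'=1..kk. G (snd (rha_enum K S ! (c - 1))) (fst (rha_enum K S ! (c' - 1))))
        / (real kk * real kk) = (\<Sum>x\<in>S. \<Sum>y\<in>S. G (snd x) (fst y)) / (real kk * real kk)"
      using sum_rha_enum_nth[of S K "\<lambda>x. \<Sum>y\<in>S. G (snd x) (fst y)"] \<open>card S = kk\<close> \<open>S \<subseteq> ?U\<close> by simp
  qed
  also have "\<dots> = (real kk / real (K * K))\<^sup>2 * (real K * real K * ?T) / (real kk * real kk)"
    using expectation_subset_double_sum[of ?U kk "\<lambda>x y. G (snd x) (fst y)"] assms
      sum_grid_cross[of G K] sum_grid_swap[of G K] by simp
  also have "\<dots> = grid_avg K G"
    using assms by (simp add: grid_avg_def power2_eq_square)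
  finally show ?thesis .
qed

section \<open>The process as the leaves of a labelled binary tree\<close>

lemma length_rha_Y: "length (rha_Y k \<omega> n j) = 2 ^ n"
  by (induction n arbitrary: j) (simp_all add: Let_def)

text \<open>Nodes \<open>p \<ge> 1\<close> are in heap numbering: on level \<open>n\<close> the root carries \<open>C\<^sub>n\<close>, and the children
  \<open>2q\<close>, \<open>2q + 1\<close> carry the pair \<open>(L, R)\<close> selected by the label of \<open>q\<close> on level \<open>n + 1\<close>.\<close>
function rha_label :: "(nat \<Rightarrow> nat) \<Rightarrow> (nat \<Rightarrow> (nat \<times> nat) set \<times> nat) \<Rightarrow> nat \<Rightarrow> nat \<Rightarrow> nat" where
  "rha_label k \<omega> n p = (if p \<le> 1 then snd (\<omega> n) else
     (let e = rha_enum (k n) (fst (\<omega> (Suc n))) ! (rha_label k \<omega> (Suc n) (p div 2) - 1)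
      in if even p then fst e else snd e))"
  by auto
termination by (relation "Wellfounded.measure (\<lambda>(k, \<omega>, n, p). p)") auto

declare rha_label.simps [simp del]

lemma rha_label_root: "p \<le> 1 \<Longrightarrow> rha_label k \<omega> n p = snd (\<omega> n)"
  by (simp add: rha_label.simps)

lemma rha_label_even:
  "1 \<le> q \<Longrightarrow> rha_label k \<omega> n (2 * q) = fst (rha_enum (k n) (fst (\<omega> (Suc n))) ! (rha_label k \<omega> (Suc n) q - 1))"
  by (subst rha_label.simps) (simp add: Let_def)

lemma rha_label_odd:
  "1 \<le> q \<Longrightarrow> rha_label k \<omega> n (Suc (2 * q)) = snd (rha_enum (k n) (fst (\<omega> (Suc n))) ! (rha_label k \<omega> (Suc n) q - 1))"
  by (subst rha_label.simps) (simp add: Let_def)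

lemma rha_Y_Suc_label:
  "1 \<le> q \<Longrightarrow> rha_Y k \<omega> (Suc n) (rha_label k \<omega> (Suc n) q)
     = rha_Y k \<omega> n (rha_label k \<omega> n (2 * q)) @ rha_Y k \<omega> n (rha_label k \<omega> n (Suc (2 * q)))"
  by (simp add: rha_label_even rha_label_odd Let_def)

definition rha_prefix :: "(nat \<Rightarrow> nat) \<Rightarrow> (nat \<Rightarrow> (nat \<times> nat) set \<times> nat) \<Rightarrow> nat \<Rightarrow> nat list" where
  "rha_prefix k \<omega> N = concat (map (\<lambda>m. rha_Y k \<omega> m (snd (\<omega> m))) [0..<N])"

definition rha_letter :: "(nat \<Rightarrow> nat) \<Rightarrow> (nat \<Rightarrow> (nat \<times> nat) set \<times> nat) \<Rightarrow> nat \<Rightarrow> nat" where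
  "rha_letter k \<omega> t = rha_prefix k \<omega> t ! (t - 1)"

lemma length_rha_prefix: "length (rha_prefix k \<omega> N) = 2 ^ N - 1"
proof (induction N)
  case (Suc N)
  have "(1::nat) \<le> 2 ^ N" by simp
  then show ?case using Suc by (simp add: rha_prefix_def length_rha_Y)
qed (simp add: rha_prefix_def)

lemma nth_rha_prefix:
  assumes "2 ^ m \<le> t" "t < 2 ^ Suc m" "m < N"
  shows "rha_prefix k \<omega> N ! (t - 1) = rha_Y k \<omega> m (snd (\<omega> m)) ! (t - 2 ^ m)"
  using assms(3)
proof (induction N)
  case (Suc N)
  have split: "rha_prefix k \<omega> (Suc N) = rha_prefix k \<omega> N @ rha_Y k \<omega> N (snd (\<omega> N))"
    by (simp add: rha_prefix_def)
  have pos: "(1::nat) \<le> 2 ^ m" by simp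
  show ?case
  proof (cases "m < N")
    case True
    have "2 ^ Suc m \<le> (2::nat) ^ N" using True by (intro power_increasing) auto
    then have "t - 1 < length (rha_prefix k \<omega> N)"
      using assms(1,2) pos length_rha_prefix[of k \<omega> N] by linarith
    then show ?thesis using Suc True by (simp add: split nth_append)
  next
    case False
    then have "m = N" using Suc by simp
    moreover have "\<not> t - 1 < 2 ^ N - 1" "t - 1 - (2 ^ N - 1) = t - 2 ^ N"
      using assms(1,2) pos \<open>m = N\<close> by auto
    ultimately show ?thesis unfolding split using length_rha_prefix[of k \<omega> N]
      by (simp only: nth_append if_False)
  qed
qed simp

lemma rha_letter_eq_nth_rha_Y:
  assumes "2 ^ m \<le> t" "t < 2 ^ Suc m"
  shows "rha_letter k \<omega> t = rha_Y k \<omega> m (snd (\<omega> m)) ! (t - 2 ^ m)"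
proof -
  have "m < t" using less_exp[of m] assms by linarith
  then show ?thesis unfolding rha_letter_def using nth_rha_prefix[OF assms] by simp
qed

lemma nth_rha_prefix_eq_rha_letter:
  assumes "1 \<le> t" "t \<le> N"
  shows "rha_prefix k \<omega> N ! (t - 1) = rha_letter k \<omega> t"
proof -
  obtain m where m: "2 ^ m \<le> t" "t < 2 ^ Suc m" using ex_power_ivl1[of 2 t] assms by auto
  have "m < t" using less_exp[of m] m by linarith
  then show ?thesis
    using nth_rha_prefix[OF m] rha_letter_eq_nth_rha_Y[OF m] assms by simp
qed

lemma rha_Xseg_eq_map:
  assumes "1 \<le> a"
  shows "rha_Xseg k \<omega> a b = map (rha_letter k \<omega>) [a..<b + 1]"
proof (rule nth_equalityI)
  have "b \<le> 2 ^ b - 1" using less_exp[of b] by linarith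
  moreover have "rha_Xseg k \<omega> a b = drop (a - 1) (take b (rha_prefix k \<omega> b))"
    by (simp add: rha_Xseg_def rha_prefix_def)
  ultimately have seg: "rha_Xseg k \<omega> a b = drop (a - 1) (take b (rha_prefix k \<omega> b))"
    and len: "length (rha_prefix k \<omega> b) \<ge> b"
    using length_rha_prefix[of k \<omega> b] by auto
  show "length (rha_Xseg k \<omega> a b) = length (map (rha_letter k \<omega>) [a..<b + 1])"
    using len assms by (simp add: seg min_def Suc_diff_le)
  fix i assume "i < length (rha_Xseg k \<omega> a b)"
  then have i: "a + i \<le> b" using len assms by (simp add: seg min_def split: if_splits)
  then have "rha_Xseg k \<omega> a b ! i = rha_prefix k \<omega> b ! (a + i - 1)"
    using assms len by (simp add: seg nth_take)
  also have "\<dots> = rha_letter k \<omega> (a + i)"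
    using nth_rha_prefix_eq_rha_letter[of "a + i" b] i assms by simp
  finally show "rha_Xseg k \<omega> a b ! i = map (rha_letter k \<omega>) [a..<b + 1] ! i"
    using i by (simp del: upt_Suc)
qed

lemma rha_letter_eq_label:
  assumes "1 \<le> p" "r < 2 ^ n"
  shows "rha_letter k \<omega> (p * 2 ^ n + r) = rha_Y k \<omega> n (rha_label k \<omega> n p) ! r"
  using assms
proof (induction p arbitrary: n r rule: less_induct)
  case (less p)
  show ?case
  proof (cases "p = 1")
    case True
    then show ?thesis using less.prems rha_letter_eq_nth_rha_Y[of n "2 ^ n + r" k \<omega>]
      by (simp add: rha_label_root)
  next
    case False
    define q where "q = p div 2"
    have q: "1 \<le> q" "q < p" using False less.prems unfolding q_def by auto
    define r' where "r' = p mod 2 * 2 ^ n + r"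
    have r': "r' < 2 ^ Suc n" using less.prems unfolding r'_def by (cases "even p") (auto simp: odd_iff_mod_2_eq_one)
    have "q * 2 ^ Suc n + r' = (2 * q + p mod 2) * 2 ^ n + r"
      unfolding r'_def by (simp add: algebra_simps)
    also have "2 * q + p mod 2 = p" unfolding q_def by simp
    finally have "rha_letter k \<omega> (p * 2 ^ n + r) = rha_Y k \<omega> (Suc n) (rha_label k \<omega> (Suc n) q) ! r'"
      using less.IH[OF q(2) q(1) r'] by simp
    also have "\<dots> = rha_Y k \<omega> n (rha_label k \<omega> n p) ! r"
    proof (cases "even p")
      case True
      then have "p = 2 * q" "r' = r" unfolding q_def r'_def by auto
      then show ?thesis unfolding rha_Y_Suc_label[OF q(1)] using less.prems by (simp add: nth_append length_rha_Y)
    next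
      case False
      then have "p = Suc (2 * q)" "r' = 2 ^ n + r" unfolding q_def r'_def by (auto simp: odd_iff_mod_2_eq_one)
      then show ?thesis unfolding rha_Y_Suc_label[OF q(1)] using less.prems by (simp add: nth_append length_rha_Y)
    qed
    finally show ?thesis .
  qed
qed

lemma rha_Xblock_eq_label:
  assumes "1 \<le> j"
  shows "rha_Xblock k \<omega> n j = rha_Y k \<omega> n (rha_label k \<omega> n j)"
proof -
  have "rha_Xblock k \<omega> n j = map (rha_letter k \<omega>) [j * 2 ^ n..<(j + 1) * 2 ^ n]"
    unfolding rha_Xblock_def using assms by (subst rha_Xseg_eq_map) auto
  also have "\<dots> = map (\<lambda>r. rha_letter k \<omega> (j * 2 ^ n + r)) [0..<2 ^ n]"
    by (simp add: map_add_upt[symmetric] algebra_simps)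
  also have "\<dots> = rha_Y k \<omega> n (rha_label k \<omega> n j)"
    using rha_letter_eq_label[OF assms] by (intro nth_equalityI) (simp_all add: length_rha_Y)
  finally show ?thesis .
qed

lemma rha_window_eq:
  assumes i: "2 ^ n \<le> i"
  shows "rha_Xseg k w i (i + 2 ^ n - 1) = take (2 ^ n) (drop (i mod 2 ^ n)
     (rha_Y k w n (rha_label k w n (i div 2 ^ n)) @ rha_Y k w n (rha_label k w n (Suc (i div 2 ^ n)))))"
    (is "_ = take ?m (drop ?r ?Z)")
proof -
  let ?p = "i div ?m"
  have p: "1 \<le> ?p" using i by (simp add: div_le_mono[of "2 ^ n" i "2 ^ n", simplified])
  have r: "?r < ?m" by simp
  have i1: "1 \<le> i" using i by (meson le_trans one_le_numeral one_le_power)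
  have i_eq: "i = ?p * ?m + ?r" by (rule div_mult_mod_eq[symmetric])
  have "rha_Xseg k w i (i + ?m - 1) = map (rha_letter k w) [i..<i + ?m]"
    using i1 by (subst rha_Xseg_eq_map) auto
  also have "\<dots> = take ?m (drop ?r ?Z)"
  proof (rule nth_equalityI)
    show "length (map (rha_letter k w) [i..<i + ?m]) = length (take ?m (drop ?r ?Z))"
      using r by (simp add: length_rha_Y)
    fix s assume "s < length (map (rha_letter k w) [i..<i + ?m])"
    then have s: "s < ?m" by simp
    have "map (rha_letter k w) [i..<i + ?m] ! s = rha_letter k w (?p * ?m + (?r + s))"
      using s i_eq by (simp add: algebra_simps)
    also have "\<dots> = ?Z ! (?r + s)"
    proof (cases "?r + s < ?m")
      case True
      then show ?thesis using rha_letter_eq_label[OF p True] by (simp add: nth_append length_rha_Y)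
    next
      case False
      then have "?p * ?m + (?r + s) = Suc ?p * ?m + (?r + s - ?m)" by simp
      moreover have "?r + s - ?m < ?m" using r s by linarith
      ultimately show ?thesis using rha_letter_eq_label[of "Suc ?p" "?r + s - ?m" n k w] False
        by (simp add: nth_append length_rha_Y)
    qed
    also have "\<dots> = take ?m (drop ?r ?Z) ! s"
    proof -
      have "length ?Z = 2 * ?m" by (simp add: length_rha_Y)
      then have "?r \<le> length ?Z" using r by linarith
      then show ?thesis using s by (simp only: nth_take nth_drop)
    qed
    finally show "map (rha_letter k w) [i..<i + ?m] ! s = take ?m (drop ?r ?Z) ! s" .
  qed
  finally show ?thesis .
qed

lemma length_rha_window: "1 \<le> i \<Longrightarrow> length (rha_Xseg k w i (i + 2 ^ n - 1)) = 2 ^ n"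
  using le_trans[of 1 "2 ^ n"] by (subst rha_Xseg_eq_map) auto

lemma sublist_map_upt:
  assumes "a \<le> b" "b \<le> c" "c \<le> d"
  shows "sublist (map f [b..<c]) (map f [a..<d])"
proof -
  have split: "[x..<z] = [x..<y] @ [y..<z]" if "x \<le> y" "y \<le> z" for x y z :: nat
    using upt_add_eq_append[OF that(1), of "z - y"] that by simp
  have "map f [a..<d] = map f [a..<b] @ map f [b..<c] @ map f [c..<d]"
    using assms split[of a b d] split[of b c d] by simp
  then show ?thesis by (metis sublist_appendI)
qed

text \<open>\<open>q\<close> indexes the first block \<open>X\<^sup>n\<^sub>q\<close> that starts at or after position \<open>i\<close>.\<close>
lemma sublist_rha_Xblock_window:
  fixes n i :: nat
  assumes i: "1 \<le> i"
  defines "q \<equiv> (i + 2 ^ n - 1) div 2 ^ n"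
  shows "1 \<le> q" "q \<le> i" "sublist (rha_Xblock k w n q) (rha_Xseg k w i (i + 2 ^ Suc n - 1))"
proof -
  define h where "h = (2::nat) ^ n"
  have h: "1 \<le> h" "(2::nat) ^ Suc n = 2 * h" unfolding h_def by simp_all
  define r where "r = (i + h - 1) mod h"
  have qr: "i + h - 1 = q * h + r" "r < h" using h unfolding q_def h_def[symmetric] r_def by simp_all
  then have lo: "i \<le> q * h" and hi: "q * h + h \<le> i + 2 * h" using h by linarith+
  show "1 \<le> q" using lo i h by (cases q) auto
  have "q * h \<le> i + h - 1" using qr by linarith
  also have "\<dots> \<le> i * h"
  proof -
    obtain i' where "i = Suc i'" using i by (cases i) auto
    moreover obtain h' where "h = Suc h'" using h(1) by (cases h) auto
    ultimately show ?thesis by simp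
  qed
  finally show "q \<le> i" using h by simp
  have "rha_Xblock k w n q = map (rha_letter k w) [q * h..<q * h + h]"
  proof -
    have "1 \<le> q * h" using lo i by linarith
    then show ?thesis
      unfolding rha_Xblock_def h_def[symmetric] by (subst rha_Xseg_eq_map) (auto simp: algebra_simps)
  qed
  moreover have "rha_Xseg k w i (i + 2 ^ Suc n - 1) = map (rha_letter k w) [i..<i + 2 * h]"
    using i h by (subst rha_Xseg_eq_map) auto
  ultimately show "sublist (rha_Xblock k w n q) (rha_Xseg k w i (i + 2 ^ Suc n - 1))"
    using lo hi by (simp add: sublist_map_upt)
qed

section \<open>Reduction to finitely many levels\<close>

definition rha_prefix_pmf :: "(nat \<Rightarrow> nat) \<Rightarrow> nat \<Rightarrow> (nat \<Rightarrow> (nat \<times> nat) set \<times> nat) pmf" where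
  "rha_prefix_pmf k M = Pi_pmf {..M} ({}, 0) (rha_level_pmf k)"

lemma integral_RHA_P_eq_prefix:
  fixes F :: "(nat \<Rightarrow> (nat \<times> nat) set \<times> nat) \<Rightarrow> real"
  assumes meas: "F \<in> borel_measurable (RHA_P k)"
    and dep: "\<And>w w'. (\<forall>i\<le>M. w i = w' i) \<Longrightarrow> F w = F w'"
  shows "integral\<^sup>L (RHA_P k) F = measure_pmf.expectation (rha_prefix_pmf k M) F"
proof -
  let ?Mi = "\<lambda>i. measure_pmf (rha_level_pmf k i)"
  let ?J = "{..M}"
  interpret product_prob_space ?Mi "UNIV :: nat set"
    by (intro product_prob_spaceI measure_pmf.prob_space_axioms)
  define ext where "ext g = (\<lambda>i. if i \<in> ?J then g i else ({}, 0))" for g :: "nat \<Rightarrow> (nat \<times> nat) set \<times> nat"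
  have "(\<lambda>g. \<lambda>i\<in>UNIV. if i \<in> ?J then g i else ({}, 0)) \<in> PiM ?J ?Mi \<rightarrow>\<^sub>M PiM UNIV ?Mi"
  proof (rule measurable_restrict)
    fix i :: nat
    show "(\<lambda>g. if i \<in> ?J then g i else ({}, 0)) \<in> PiM ?J ?Mi \<rightarrow>\<^sub>M ?Mi i"
      by (cases "i \<in> ?J") (auto intro: measurable_component_singleton)
  qed
  then have "ext \<in> PiM ?J ?Mi \<rightarrow>\<^sub>M PiM UNIV ?Mi" unfolding ext_def restrict_UNIV by simp
  then have meas_ext: "(\<lambda>g. F (ext g)) \<in> borel_measurable (PiM ?J ?Mi)"
    using measurable_comp meas unfolding RHA_P_def comp_def by blast
  have F_ext: "F w = F (ext (restrict w ?J))" for w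
    by (rule dep) (simp add: ext_def)
  have "integral\<^sup>L (RHA_P k) F = integral\<^sup>L (PiM UNIV ?Mi) (\<lambda>w. F (ext (restrict w ?J)))"
    unfolding RHA_P_def by (intro Bochner_Integration.integral_cong refl F_ext)
  also have "\<dots> = integral\<^sup>L (distr (PiM UNIV ?Mi) (PiM ?J ?Mi) (\<lambda>w. restrict w ?J)) (\<lambda>g. F (ext g))"
    by (rule integral_distr[symmetric]) (rule measurable_restrict_subset, simp, rule meas_ext)
  also have "distr (PiM UNIV ?Mi) (PiM ?J ?Mi) (\<lambda>w. restrict w ?J) = PiM ?J ?Mi"
    by (rule distr_PiM_restrict_finite) auto
  also have "\<dots> = distr (measure_pmf (rha_prefix_pmf k M)) (PiM ?J ?Mi) (\<lambda>f. restrict f ?J)"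
    unfolding rha_prefix_pmf_def by (rule PiM_eq_distr_Pi_pmf) simp
  also have "integral\<^sup>L \<dots> (\<lambda>g. F (ext g)) = measure_pmf.expectation (rha_prefix_pmf k M) (\<lambda>f. F (ext (restrict f ?J)))"
    by (rule integral_distr) (auto simp: space_PiM meas_ext)
  also have "\<dots> = measure_pmf.expectation (rha_prefix_pmf k M) F"
    by (intro Bochner_Integration.integral_cong refl F_ext[symmetric])
  finally show ?thesis .
qed

lemma measurable_countable_comp2:
  fixes f :: "'x \<Rightarrow> 'a::countable" and g :: "'x \<Rightarrow> 'b::countable"
  assumes "f \<in> M \<rightarrow>\<^sub>M count_space UNIV" "g \<in> M \<rightarrow>\<^sub>M count_space UNIV"
  shows "(\<lambda>x. h (f x) (g x)) \<in> M \<rightarrow>\<^sub>M count_space UNIV"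
proof -
  have "(\<lambda>x. (\<lambda>i x. h i (g x)) (f x) x) \<in> M \<rightarrow>\<^sub>M count_space UNIV"
  proof (rule measurable_compose_countable[OF _ assms(1)])
    fix i
    have "h i \<in> count_space UNIV \<rightarrow>\<^sub>M count_space UNIV" by simp
    from measurable_comp[OF assms(2) this] show "(\<lambda>x. h i (g x)) \<in> M \<rightarrow>\<^sub>M count_space UNIV"
      by (simp add: comp_def)
  qed
  then show ?thesis by simp
qed

lemma borel_measurable_countable_comp:
  fixes f :: "'x \<Rightarrow> 'a::countable" and h :: "'a \<Rightarrow> real"
  assumes "f \<in> M \<rightarrow>\<^sub>M count_space UNIV"
  shows "(\<lambda>x. h (f x)) \<in> borel_measurable M"
  using measurable_comp[OF assms, of h borel] by (simp add: comp_def)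

lemma measurable_rha_coordinate: "(\<lambda>w. h (w i)) \<in> RHA_P k \<rightarrow>\<^sub>M count_space UNIV"
proof -
  have "(\<lambda>w. w i) \<in> RHA_P k \<rightarrow>\<^sub>M measure_pmf (rha_level_pmf k i)"
    unfolding RHA_P_def by (rule measurable_component_singleton) simp
  from measurable_comp[OF this, of h "count_space UNIV"] show ?thesis by (simp add: comp_def)
qed

lemma measurable_rha_Y: "(\<lambda>w. rha_Y k w n j) \<in> RHA_P k \<rightarrow>\<^sub>M count_space UNIV"
proof (induction n arbitrary: j)
  case (Suc n)
  have "(\<lambda>w. (\<lambda>e w. rha_Y k w n (fst e) @ rha_Y k w n (snd e)) (rha_enum (k n) (fst (w (Suc n))) ! (j - 1)) w)
     \<in> RHA_P k \<rightarrow>\<^sub>M count_space UNIV"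
    by (rule measurable_compose_countable[OF _ measurable_rha_coordinate])
      (rule measurable_countable_comp2[OF Suc.IH Suc.IH])
  then show ?case by (simp add: Let_def)
qed simp

lemma measurable_rha_label: "(\<lambda>w. rha_label k w n p) \<in> RHA_P k \<rightarrow>\<^sub>M count_space UNIV"
proof (induction p arbitrary: n rule: less_induct)
  case (less p)
  show ?case
  proof (cases "p \<le> 1")
    case True
    then show ?thesis using measurable_rha_coordinate[of snd n k] by (simp add: rha_label_root)
  next
    case False
    then have "(\<lambda>w. rha_label k w n p) = (\<lambda>w. (\<lambda>l c. let e = l ! (c - 1) in if even p then fst e else snd e)
        (rha_enum (k n) (fst (w (Suc n)))) (rha_label k w (Suc n) (p div 2)))"
      by (subst rha_label.simps) simp
    moreover have "p div 2 < p" using False by simp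
    ultimately show ?thesis
      using measurable_countable_comp2[OF measurable_rha_coordinate less.IH] by simp
  qed
qed

lemma measurable_rha_Y_label: "(\<lambda>w. rha_Y k w n (rha_label k w n p)) \<in> RHA_P k \<rightarrow>\<^sub>M count_space UNIV"
  using measurable_compose_countable[OF measurable_rha_Y measurable_rha_label] by simp

lemma rha_Y_cong:
  "(\<And>i. 1 \<le> i \<Longrightarrow> i \<le> n \<Longrightarrow> fst (w i) = fst (w' i)) \<Longrightarrow> rha_Y k w n a = rha_Y k w' n a"
proof (induction n arbitrary: a)
  case (Suc n)
  then have "fst (w (Suc n)) = fst (w' (Suc n))" "\<And>b. rha_Y k w n b = rha_Y k w' n b" by auto
  then show ?case by (simp add: Let_def)
qed simp

lemma rha_label_cong: "(\<And>i. i \<le> n + p \<Longrightarrow> w i = w' i) \<Longrightarrow> rha_label k w n p = rha_label k w' n p"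
proof (induction p arbitrary: n rule: less_induct)
  case (less p)
  show ?case
  proof (cases "p \<le> 1")
    case True
    then show ?thesis using less.prems by (simp add: rha_label_root)
  next
    case False
    then have "rha_label k w (Suc n) (p div 2) = rha_label k w' (Suc n) (p div 2)"
      using less by (intro less.IH) auto
    moreover have "w (Suc n) = w' (Suc n)" using less.prems False by auto
    ultimately show ?thesis using False by (subst (1 2) rha_label.simps) simp
  qed
qed

locale rha_perplexities =
  fixes k :: "nat \<Rightarrow> nat"
  assumes perplexity_pos: "0 < k i"
    and perplexity_le_square: "k (Suc n) \<le> k n * k n"
begin

abbreviation prefix_expectation :: "nat \<Rightarrow> ((nat \<Rightarrow> (nat \<times> nat) set \<times> nat) \<Rightarrow> real) \<Rightarrow> real" where
  "prefix_expectation M F \<equiv> measure_pmf.expectation (rha_prefix_pmf k M) F"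

lemma choices_nonempty: "{1..k i} \<noteq> {}"
  using perplexity_pos[of i] by auto

lemma level_subsets_nonempty: "grid_subsets (k n) (k (Suc n)) \<noteq> {}"
  using perplexity_le_square by (intro grid_subsets_nonempty)

lemma rha_level_pmf_Suc:
  "rha_level_pmf k (Suc n) = pair_pmf (pmf_of_set (grid_subsets (k n) (k (Suc n)))) (pmf_of_set {1..k (Suc n)})"
  by (simp add: rha_level_pmf_def)

lemma rha_level_pmf_eq_pair_pmf:
  obtains A where "finite (set_pmf A)" "rha_level_pmf k n = pair_pmf A (pmf_of_set {1..k n})"
proof (cases n)
  case 0
  then show ?thesis
    using that[of "return_pmf {}"] by (simp add: rha_level_pmf_def pair_return_pmf1)
next
  case (Suc m)
  show ?thesis
  proof (rule that)
    show "finite (set_pmf (pmf_of_set (grid_subsets (k m) (k (Suc m)))))"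
      using level_subsets_nonempty[of m] finite_subsets_card[of "{1..k m} \<times> {1..k m}"] by simp
  qed (simp add: Suc rha_level_pmf_Suc)
qed

lemma finite_set_rha_level_pmf: "finite (set_pmf (rha_level_pmf k i))"
proof -
  obtain A where "finite (set_pmf A)" "rha_level_pmf k i = pair_pmf A (pmf_of_set {1..k i})"
    by (rule rha_level_pmf_eq_pair_pmf)
  then show ?thesis using choices_nonempty[of i] by simp
qed

lemma finite_set_rha_prefix_pmf: "finite (set_pmf (rha_prefix_pmf k M))"
  unfolding rha_prefix_pmf_def by (intro finite_set_Pi_pmf finite_set_rha_level_pmf) auto

lemma set_rha_level_pmf_choice: "x \<in> set_pmf (rha_level_pmf k i) \<Longrightarrow> snd x \<in> {1..k i}"
proof -
  obtain A where "rha_level_pmf k i = pair_pmf A (pmf_of_set {1..k i})"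
    by (rule rha_level_pmf_eq_pair_pmf)
  moreover assume "x \<in> set_pmf (rha_level_pmf k i)"
  ultimately show "snd x \<in> {1..k i}" using choices_nonempty[of i] by (auto simp del: atLeastAtMost_iff)
qed

lemma set_rha_level_pmf_subset:
  "x \<in> set_pmf (rha_level_pmf k (Suc n)) \<Longrightarrow> fst x \<in> grid_subsets (k n) (k (Suc n))"
  using level_subsets_nonempty[of n] finite_subsets_card[of "{1..k n} \<times> {1..k n}"]
  by (auto simp: rha_level_pmf_Suc)

lemma prefix_expectation_resample:
  "m \<le> M \<Longrightarrow> prefix_expectation M F
     = prefix_expectation M (\<lambda>w. measure_pmf.expectation (rha_level_pmf k m) (\<lambda>x. F (w(m := x))))"
  unfolding rha_prefix_pmf_def
  by (rule expectation_Pi_pmf_resample) (auto intro: finite_set_rha_level_pmf)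

lemma expectation_rha_level_Suc:
  fixes f :: "(nat \<times> nat) set \<Rightarrow> nat \<Rightarrow> real"
  shows "measure_pmf.expectation (rha_level_pmf k (Suc n)) (\<lambda>x. f (fst x) (snd x))
       = measure_pmf.expectation (pmf_of_set (grid_subsets (k n) (k (Suc n))))
           (\<lambda>S. (\<Sum>c=1..k (Suc n). f S c) / real (k (Suc n)))"
  unfolding rha_level_pmf_Suc
  using level_subsets_nonempty[of n] choices_nonempty[of "Suc n"] finite_subsets_card[of "{1..k n} \<times> {1..k n}"]
  by (subst expectation_pair_pmf) (auto simp: integral_pmf_of_set)

lemma expectation_rha_level_choice:
  fixes \<Psi> :: "nat \<Rightarrow> (nat \<times> nat) set \<times> nat \<Rightarrow> real"
  assumes \<Psi>: "\<And>c x c'. \<Psi> c x = \<Psi> c (fst x, c')"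
  shows "measure_pmf.expectation (rha_level_pmf k n) (\<lambda>x. \<Psi> (snd x) x)
       = measure_pmf.expectation (rha_level_pmf k n) (\<lambda>x. (\<Sum>c=1..k n. \<Psi> c x) / real (k n))"
proof -
  obtain A where A: "finite (set_pmf A)" and P: "rha_level_pmf k n = pair_pmf A (pmf_of_set {1..k n})"
    by (rule rha_level_pmf_eq_pair_pmf)
  have B: "finite (set_pmf (pmf_of_set {1..k n}))" using choices_nonempty[of n] by simp
  have inner: "measure_pmf.expectation (pmf_of_set {1..k n}) (\<lambda>b. \<Psi> b (a, b))
      = measure_pmf.expectation (pmf_of_set {1..k n}) (\<lambda>b. (\<Sum>c=1..k n. \<Psi> c (a, b)) / real (k n))" for a
  proof -
    have choice: "\<Psi> c (a, b) = \<Psi> c (a, 1)" for b c using \<Psi>[of c "(a, b)" 1] by simp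
    have "(\<Sum>b=1..k n. (\<Sum>c=1..k n. \<Psi> c (a, b)) / real (k n))
        = (\<Sum>b=1..k n. (\<Sum>c=1..k n. \<Psi> c (a, 1)) / real (k n))"
      by (intro sum.cong refl arg_cong[where f="\<lambda>t. t / real (k n)"] choice)
    also have "\<dots> = (\<Sum>c=1..k n. \<Psi> c (a, 1))"
      using perplexity_pos[of n] by simp
    also have "\<dots> = (\<Sum>b=1..k n. \<Psi> b (a, b))"
      by (intro sum.cong refl choice[symmetric])
    finally have "(\<Sum>b=1..k n. \<Psi> b (a, b)) / real (k n)
        = (\<Sum>b=1..k n. (\<Sum>c=1..k n. \<Psi> c (a, b)) / real (k n)) / real (k n)" by simp
    then show ?thesis using choices_nonempty[of n] by (simp add: integral_pmf_of_set sum_divide_distrib[symmetric])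
  qed
  show ?thesis unfolding P expectation_pair_pmf[OF A B] snd_conv inner ..
qed

end

section \<open>Adjacent labels are uniform\<close>

definition depends_on_subsets ::
    "nat \<Rightarrow> (nat \<Rightarrow> nat \<Rightarrow> (nat \<Rightarrow> (nat \<times> nat) set \<times> nat) \<Rightarrow> real) \<Rightarrow> bool" where
  "depends_on_subsets n G \<longleftrightarrow>
     (\<forall>a b w w'. (\<forall>i\<in>{1..n}. fst (w i) = fst (w' i)) \<longrightarrow> G a b w = G a b w')"

lemma depends_on_subsets_upd_above:
  assumes "depends_on_subsets n G" "n < m"
  shows "G a b (w(m := x)) = G a b w"
proof -
  have "\<forall>i\<in>{1..n}. fst ((w(m := x)) i) = fst (w i)" using assms(2) by auto
  then show ?thesis using assms(1) unfolding depends_on_subsets_def by blast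
qed

lemma depends_on_subsets_upd_choice:
  assumes "depends_on_subsets n G"
  shows "G a b (w(m := x)) = G a b (w(m := (fst x, c)))"
proof -
  have "\<forall>i\<in>{1..n}. fst ((w(m := x)) i) = fst ((w(m := (fst x, c))) i)" by auto
  then show ?thesis using assms unfolding depends_on_subsets_def by blast
qed

context rha_perplexities
begin

lemma expectation_rha_level_subset:
  fixes f :: "(nat \<times> nat) set \<Rightarrow> real"
  shows "measure_pmf.expectation (rha_level_pmf k (Suc n)) (\<lambda>x. f (fst x))
     = measure_pmf.expectation (pmf_of_set (grid_subsets (k n) (k (Suc n)))) f"
  unfolding rha_level_pmf_Suc by (rule expectation_pair_pmf_fst)

lemma perplexity_bounds: "1 \<le> k n" "1 \<le> k (Suc n)" "k (Suc n) \<le> k n * k n"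
  using perplexity_pos[of n] perplexity_pos[of "Suc n"] perplexity_le_square[of n] by auto

lemma expectation_rha_level_enum_pairs:
  "measure_pmf.expectation (rha_level_pmf k (Suc n))
      (\<lambda>x. (\<Sum>c=1..k (Suc n). G (fst (rha_enum (k n) (fst x) ! (c - 1))) (snd (rha_enum (k n) (fst x) ! (c - 1))))
        / real (k (Suc n)))
    = grid_avg (k n) G"
  by (subst expectation_rha_level_subset[where f="\<lambda>S. (\<Sum>c=1..k (Suc n).
        G (fst (rha_enum (k n) S ! (c - 1))) (snd (rha_enum (k n) S ! (c - 1)))) / real (k (Suc n))"])
    (rule expectation_rha_enum_pairs[OF perplexity_bounds])

lemma expectation_rha_level_enum_cross_pairs:
  "measure_pmf.expectation (rha_level_pmf k (Suc n))
      (\<lambda>x. (\<Sum>c=1..k (Suc n). \<Sum>c'=1..k (Suc n).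
          G (snd (rha_enum (k n) (fst x) ! (c - 1))) (fst (rha_enum (k n) (fst x) ! (c' - 1))))
        / (real (k (Suc n)) * real (k (Suc n))))
    = grid_avg (k n) G"
  by (subst expectation_rha_level_subset[where f="\<lambda>S. (\<Sum>c=1..k (Suc n). \<Sum>c'=1..k (Suc n).
          G (snd (rha_enum (k n) S ! (c - 1))) (fst (rha_enum (k n) S ! (c' - 1))))
        / (real (k (Suc n)) * real (k (Suc n)))"])
    (rule expectation_rha_enum_cross_pairs[OF perplexity_bounds])

lemma depends_on_subsets_Suc:
  assumes "depends_on_subsets n G"
  shows "depends_on_subsets (Suc n)
    (\<lambda>c c' w. G (u (rha_enum (k n) (fst (w (Suc n)))) c c') (v (rha_enum (k n) (fst (w (Suc n)))) c c') w)"
  unfolding depends_on_subsets_def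
proof (intro allI impI)
  fix a b and w w' :: "nat \<Rightarrow> (nat \<times> nat) set \<times> nat"
  assume "\<forall>i\<in>{1..Suc n}. fst (w i) = fst (w' i)"
  moreover from this have "G x y w = G x y w'" for x y
    using assms unfolding depends_on_subsets_def by simp
  ultimately show "G (u (rha_enum (k n) (fst (w (Suc n)))) a b) (v (rha_enum (k n) (fst (w (Suc n)))) a b) w
      = G (u (rha_enum (k n) (fst (w' (Suc n)))) a b) (v (rha_enum (k n) (fst (w' (Suc n)))) a b) w'"
    by simp
qed

lemma expectation_rha_level_first_child:
  "measure_pmf.expectation (rha_level_pmf k (Suc n)) (\<lambda>x. H (fst (rha_enum (k n) (fst x) ! (snd x - 1))))
     = (\<Sum>a=1..k n. H a) / real (k n)"
proof -
  have "grid_avg (k n) (\<lambda>a b. H a) = (\<Sum>a=1..k n. H a) / real (k n)"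
    using perplexity_pos[of n] by (simp add: grid_avg_def sum_distrib_left[symmetric])
  then show ?thesis
    using expectation_rha_level_Suc[of n "\<lambda>S c. H (fst (rha_enum (k n) S ! (c - 1)))"]
      expectation_rha_enum_pairs[OF perplexity_bounds, of n "\<lambda>a b. H a"] by simp
qed

lemma expectation_rha_level_root:
  assumes G: "depends_on_subsets n G"
  shows "measure_pmf.expectation (rha_level_pmf k n) (\<lambda>x. (\<Sum>a=1..k n. G (snd x) a (w(n := x))) / real (k n))
       = measure_pmf.expectation (rha_level_pmf k n) (\<lambda>x. grid_avg (k n) (\<lambda>a b. G a b (w(n := x))))"
proof -
  define \<Psi> where "\<Psi> c x = (\<Sum>a=1..k n. G c a (w(n := x))) / real (k n)" for c x
  have "\<Psi> c x = \<Psi> c (fst x, c')" for c x c'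
    unfolding \<Psi>_def using depends_on_subsets_upd_choice[OF G] by simp
  then have "measure_pmf.expectation (rha_level_pmf k n) (\<lambda>x. \<Psi> (snd x) x)
      = measure_pmf.expectation (rha_level_pmf k n) (\<lambda>x. (\<Sum>c=1..k n. \<Psi> c x) / real (k n))"
    by (rule expectation_rha_level_choice)
  then show ?thesis
    by (simp add: \<Psi>_def grid_avg_def sum_divide_distrib[symmetric] mult.commute)
qed

lemma expectation_adjacent_labels_root:
  assumes G: "depends_on_subsets n G" and M: "Suc (Suc n) \<le> M"
  shows "prefix_expectation M (\<lambda>w. G (rha_label k w n 1) (rha_label k w n 2) w)
       = prefix_expectation M (\<lambda>w. grid_avg (k n) (\<lambda>a b. G a b w))"
proof -
  have "prefix_expectation M (\<lambda>w. G (rha_label k w n 1) (rha_label k w n 2) w)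
      = prefix_expectation M (\<lambda>w. G (snd (w n)) (fst (rha_enum (k n) (fst (w (Suc n))) ! (snd (w (Suc n)) - 1))) w)"
    using rha_label_even[of 1 k _ n] by (simp add: rha_label_root)
  also have "\<dots> = prefix_expectation M (\<lambda>w. measure_pmf.expectation (rha_level_pmf k (Suc n))
      (\<lambda>x. G (snd (w n)) (fst (rha_enum (k n) (fst x) ! (snd x - 1))) w))"
    using M by (subst prefix_expectation_resample[of "Suc n"]) (simp_all add: depends_on_subsets_upd_above[OF G])
  also have "\<dots> = prefix_expectation M (\<lambda>w. (\<Sum>a=1..k n. G (snd (w n)) a w) / real (k n))"
  proof -
    have "measure_pmf.expectation (rha_level_pmf k (Suc n))
        (\<lambda>x. G (snd (w n)) (fst (rha_enum (k n) (fst x) ! (snd x - 1))) w)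
      = (\<Sum>a=1..k n. G (snd (w n)) a w) / real (k n)" for w
      by (rule expectation_rha_level_first_child)
    then show ?thesis by simp
  qed
  also have "\<dots> = prefix_expectation M (\<lambda>w. measure_pmf.expectation (rha_level_pmf k n)
      (\<lambda>x. (\<Sum>a=1..k n. G (snd x) a (w(n := x))) / real (k n)))"
    using M by (subst prefix_expectation_resample[of n]) simp_all
  also have "\<dots> = prefix_expectation M (\<lambda>w. measure_pmf.expectation (rha_level_pmf k n)
      (\<lambda>x. grid_avg (k n) (\<lambda>a b. G a b (w(n := x)))))"
    by (simp only: expectation_rha_level_root[OF G])
  also have "\<dots> = prefix_expectation M (\<lambda>w. grid_avg (k n) (\<lambda>a b. G a b w))"
    using M by (intro prefix_expectation_resample[symmetric]) simp
  finally show ?thesis .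
qed

lemma expectation_adjacent_labels_even:
  assumes q: "1 \<le> q" and M: "Suc n \<le> M" and G: "depends_on_subsets n G"
    and IH: "\<And>H. depends_on_subsets (Suc n) H \<Longrightarrow>
      prefix_expectation M (\<lambda>w. H (rha_label k w (Suc n) q) (rha_label k w (Suc n) (Suc q)) w)
        = prefix_expectation M (\<lambda>w. grid_avg (k (Suc n)) (\<lambda>a b. H a b w))"
  shows "prefix_expectation M (\<lambda>w. G (rha_label k w n (2 * q)) (rha_label k w n (Suc (2 * q))) w)
       = prefix_expectation M (\<lambda>w. grid_avg (k n) (\<lambda>a b. G a b w))"
proof -
  define F where "F w = (\<Sum>c=1..k (Suc n).
      G (fst (rha_enum (k n) (fst (w (Suc n))) ! (c - 1))) (snd (rha_enum (k n) (fst (w (Suc n))) ! (c - 1))) w)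
    / real (k (Suc n))" for w
  let ?H = "\<lambda>c c' w. G (fst (rha_enum (k n) (fst (w (Suc n))) ! (c - 1)))
      (snd (rha_enum (k n) (fst (w (Suc n))) ! (c - 1))) w"
  have "prefix_expectation M (\<lambda>w. G (rha_label k w n (2 * q)) (rha_label k w n (Suc (2 * q))) w)
      = prefix_expectation M (\<lambda>w. ?H (rha_label k w (Suc n) q) (rha_label k w (Suc n) (Suc q)) w)"
    by (simp add: rha_label_even[OF q] rha_label_odd[OF q])
  also have "\<dots> = prefix_expectation M (\<lambda>w. grid_avg (k (Suc n)) (\<lambda>a b. ?H a b w))"
    by (rule IH) (rule depends_on_subsets_Suc[OF G])
  also have "\<dots> = prefix_expectation M F"
  proof -
    have "grid_avg (k (Suc n)) (\<lambda>a b. ?H a b w) = F w" for w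
      using perplexity_pos[of "Suc n"] by (simp add: F_def grid_avg_def sum_distrib_left[symmetric])
    then show ?thesis by simp
  qed
  also have "\<dots> = prefix_expectation M (\<lambda>w. measure_pmf.expectation (rha_level_pmf k (Suc n)) (\<lambda>x. F (w(Suc n := x))))"
    using M by (intro prefix_expectation_resample)
  also have "\<dots> = prefix_expectation M (\<lambda>w. grid_avg (k n) (\<lambda>a b. G a b w))"
  proof -
    have "measure_pmf.expectation (rha_level_pmf k (Suc n)) (\<lambda>x. F (w(Suc n := x))) = grid_avg (k n) (\<lambda>a b. G a b w)"
      for w
    proof -
      have eq: "(\<lambda>x. F (w(Suc n := x))) = (\<lambda>x. (\<Sum>c=1..k (Suc n). G (fst (rha_enum (k n) (fst x) ! (c - 1))) (snd (rha_enum (k n) (fst x) ! (c - 1))) w)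
          / real (k (Suc n)))"
        by (rule ext) (simp add: F_def depends_on_subsets_upd_above[OF G])
      show ?thesis unfolding eq by (rule expectation_rha_level_enum_pairs)
    qed
    then show ?thesis by simp
  qed
  finally show ?thesis .
qed

lemma expectation_adjacent_labels_odd:
  assumes q: "1 \<le> q" and M: "Suc n \<le> M" and G: "depends_on_subsets n G"
    and IH: "\<And>H. depends_on_subsets (Suc n) H \<Longrightarrow>
      prefix_expectation M (\<lambda>w. H (rha_label k w (Suc n) q) (rha_label k w (Suc n) (Suc q)) w)
        = prefix_expectation M (\<lambda>w. grid_avg (k (Suc n)) (\<lambda>a b. H a b w))"
  shows "prefix_expectation M (\<lambda>w. G (rha_label k w n (Suc (2 * q))) (rha_label k w n (2 * Suc q)) w)
       = prefix_expectation M (\<lambda>w. grid_avg (k n) (\<lambda>a b. G a b w))"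
proof -
  define F where "F w = (\<Sum>c=1..k (Suc n). \<Sum>c'=1..k (Suc n).
      G (snd (rha_enum (k n) (fst (w (Suc n))) ! (c - 1))) (fst (rha_enum (k n) (fst (w (Suc n))) ! (c' - 1))) w)
    / (real (k (Suc n)) * real (k (Suc n)))" for w
  let ?H = "\<lambda>c c' w. G (snd (rha_enum (k n) (fst (w (Suc n))) ! (c - 1)))
      (fst (rha_enum (k n) (fst (w (Suc n))) ! (c' - 1))) w"
  have "prefix_expectation M (\<lambda>w. G (rha_label k w n (Suc (2 * q))) (rha_label k w n (2 * Suc q)) w)
      = prefix_expectation M (\<lambda>w. ?H (rha_label k w (Suc n) q) (rha_label k w (Suc n) (Suc q)) w)"
  proof -
    have q': "1 \<le> Suc q" by simp
    show ?thesis unfolding rha_label_odd[OF q] rha_label_even[OF q'] by (rule refl)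
  qed
  also have "\<dots> = prefix_expectation M (\<lambda>w. grid_avg (k (Suc n)) (\<lambda>a b. ?H a b w))"
    by (rule IH) (rule depends_on_subsets_Suc[OF G])
  also have "\<dots> = prefix_expectation M F"
  proof -
    have "grid_avg (k (Suc n)) (\<lambda>a b. ?H a b w) = F w" for w
      by (simp add: F_def grid_avg_def)
    then show ?thesis by simp
  qed
  also have "\<dots> = prefix_expectation M (\<lambda>w. measure_pmf.expectation (rha_level_pmf k (Suc n)) (\<lambda>x. F (w(Suc n := x))))"
    using M by (intro prefix_expectation_resample)
  also have "\<dots> = prefix_expectation M (\<lambda>w. grid_avg (k n) (\<lambda>a b. G a b w))"
  proof -
    have "measure_pmf.expectation (rha_level_pmf k (Suc n)) (\<lambda>x. F (w(Suc n := x))) = grid_avg (k n) (\<lambda>a b. G a b w)"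
      for w
    proof -
      have eq: "(\<lambda>x. F (w(Suc n := x))) = (\<lambda>x. (\<Sum>c=1..k (Suc n). \<Sum>c'=1..k (Suc n).
          G (snd (rha_enum (k n) (fst x) ! (c - 1))) (fst (rha_enum (k n) (fst x) ! (c' - 1))) w)
          / (real (k (Suc n)) * real (k (Suc n))))"
        by (rule ext) (simp add: F_def depends_on_subsets_upd_above[OF G])
      show ?thesis unfolding eq by (rule expectation_rha_level_enum_cross_pairs)
    qed
    then show ?thesis by simp
  qed
  finally show ?thesis .
qed

text \<open>Adjacent labels on level \<open>n\<close> are uniform on \<open>{1..k n}\<^sup>2\<close> and independent of the subsets
  on levels \<open>1..n\<close>: induction over the position of their common ancestor.\<close>
lemma expectation_adjacent_labels:
  assumes "1 \<le> p" "n + p + 1 \<le> M" "depends_on_subsets n G"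
  shows "prefix_expectation M (\<lambda>w. G (rha_label k w n p) (rha_label k w n (Suc p)) w)
       = prefix_expectation M (\<lambda>w. grid_avg (k n) (\<lambda>a b. G a b w))"
  using assms
proof (induction p arbitrary: n G rule: less_induct)
  case (less p)
  show ?case
  proof (cases "p = 1")
    case True
    then show ?thesis
      using expectation_adjacent_labels_root[OF less.prems(3)] less.prems(2) by (simp add: numeral_2_eq_2)
  next
    case False
    define q where "q = p div 2"
    have q: "1 \<le> q" "q < p" using False less.prems(1) unfolding q_def by auto
    have IH: "prefix_expectation M (\<lambda>w. H (rha_label k w (Suc n) q) (rha_label k w (Suc n) (Suc q)) w)
        = prefix_expectation M (\<lambda>w. grid_avg (k (Suc n)) (\<lambda>a b. H a b w))"
      if "depends_on_subsets (Suc n) H" for H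
    proof -
      have "Suc n + q + 1 \<le> M" using less.prems(2) q(2) by linarith
      from less.IH[OF q(2) q(1) this that] show ?thesis by simp
    qed
    have M: "Suc n \<le> M" using less.prems(2) by simp
    show ?thesis
    proof (cases "even p")
      case True
      then have "p = 2 * q" unfolding q_def by simp
      then show ?thesis using expectation_adjacent_labels_even[OF q(1) M less.prems(3) IH] by simp
    next
      case False
      then have "p = Suc (2 * q)" "Suc p = 2 * Suc q" unfolding q_def by simp_all
      then show ?thesis using expectation_adjacent_labels_odd[OF q(1) M less.prems(3) IH] by simp
    qed
  qed
qed

end

definition rha_adjacent ::
    "(nat \<Rightarrow> nat) \<Rightarrow> nat \<Rightarrow> nat \<Rightarrow> (nat list \<Rightarrow> nat list \<Rightarrow> real) \<Rightarrow> (nat \<Rightarrow> (nat \<times> nat) set \<times> nat) \<Rightarrow> real" where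
  "rha_adjacent k n p \<Phi> w = \<Phi> (rha_Y k w n (rha_label k w n p)) (rha_Y k w n (rha_label k w n (Suc p)))"

definition rha_uniform_pair ::
    "(nat \<Rightarrow> nat) \<Rightarrow> nat \<Rightarrow> (nat list \<Rightarrow> nat list \<Rightarrow> real) \<Rightarrow> (nat \<Rightarrow> (nat \<times> nat) set \<times> nat) \<Rightarrow> real" where
  "rha_uniform_pair k n \<Phi> w = grid_avg (k n) (\<lambda>a b. \<Phi> (rha_Y k w n a) (rha_Y k w n b))"

lemma borel_measurable_rha_adjacent: "rha_adjacent k n p \<Phi> \<in> borel_measurable (RHA_P k)"
proof -
  have "(\<lambda>w. (rha_Y k w n (rha_label k w n p), rha_Y k w n (rha_label k w n (Suc p))))
      \<in> RHA_P k \<rightarrow>\<^sub>M count_space UNIV"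
    by (rule measurable_countable_comp2[OF measurable_rha_Y_label measurable_rha_Y_label])
  from borel_measurable_countable_comp[OF this, of "case_prod \<Phi>"] show ?thesis
    unfolding rha_adjacent_def by simp
qed

lemma borel_measurable_rha_uniform_pair: "rha_uniform_pair k n \<Phi> \<in> borel_measurable (RHA_P k)"
proof -
  have "(\<lambda>w. (rha_Y k w n a, rha_Y k w n b)) \<in> RHA_P k \<rightarrow>\<^sub>M count_space UNIV" for a b
    by (rule measurable_countable_comp2[OF measurable_rha_Y measurable_rha_Y])
  from borel_measurable_countable_comp[OF this, of "case_prod \<Phi>"]
  have "(\<lambda>w. \<Phi> (rha_Y k w n a) (rha_Y k w n b)) \<in> borel_measurable (RHA_P k)" for a b by simp
  then show ?thesis unfolding rha_uniform_pair_def grid_avg_def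
    by (intro borel_measurable_divide borel_measurable_sum) simp_all
qed

lemma integral_rha_adjacent_eq_prefix:
  "n + p + 1 \<le> M \<Longrightarrow> integral\<^sup>L (RHA_P k) (rha_adjacent k n p \<Phi>)
     = measure_pmf.expectation (rha_prefix_pmf k M) (rha_adjacent k n p \<Phi>)"
proof (rule integral_RHA_P_eq_prefix[OF borel_measurable_rha_adjacent])
  fix w w' :: "nat \<Rightarrow> (nat \<times> nat) set \<times> nat"
  assume "n + p + 1 \<le> M" "\<forall>i\<le>M. w i = w' i"
  then have "rha_label k w n p = rha_label k w' n p" "rha_label k w n (Suc p) = rha_label k w' n (Suc p)"
    and "rha_Y k w n a = rha_Y k w' n a" for a
    by (auto intro!: rha_label_cong rha_Y_cong)
  then show "rha_adjacent k n p \<Phi> w = rha_adjacent k n p \<Phi> w'"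
    unfolding rha_adjacent_def by simp
qed

lemma integral_rha_uniform_pair_eq_prefix:
  "n \<le> M \<Longrightarrow> integral\<^sup>L (RHA_P k) (rha_uniform_pair k n \<Phi>)
     = measure_pmf.expectation (rha_prefix_pmf k M) (rha_uniform_pair k n \<Phi>)"
proof (rule integral_RHA_P_eq_prefix[OF borel_measurable_rha_uniform_pair])
  fix w w' :: "nat \<Rightarrow> (nat \<times> nat) set \<times> nat"
  assume "n \<le> M" "\<forall>i\<le>M. w i = w' i"
  then have "rha_Y k w n a = rha_Y k w' n a" for a
    by (auto intro!: rha_Y_cong)
  then show "rha_uniform_pair k n \<Phi> w = rha_uniform_pair k n \<Phi> w'"
    unfolding rha_uniform_pair_def by simp
qed

context rha_perplexities
begin

lemma integral_rha_adjacent: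
  assumes "1 \<le> p"
  shows "integral\<^sup>L (RHA_P k) (rha_adjacent k n p \<Phi>) = integral\<^sup>L (RHA_P k) (rha_uniform_pair k n \<Phi>)"
proof -
  have "depends_on_subsets n (\<lambda>a b w. \<Phi> (rha_Y k w n a) (rha_Y k w n b))"
    unfolding depends_on_subsets_def by (auto intro!: arg_cong2[where f=\<Phi>] rha_Y_cong)
  from expectation_adjacent_labels[OF assms order.refl this]
  have labels: "prefix_expectation (n + p + 1) (rha_adjacent k n p \<Phi>)
      = prefix_expectation (n + p + 1) (rha_uniform_pair k n \<Phi>)"
    unfolding rha_adjacent_def rha_uniform_pair_def .
  have "integral\<^sup>L (RHA_P k) (rha_adjacent k n p \<Phi>) = prefix_expectation (n + p + 1) (rha_adjacent k n p \<Phi>)"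
    by (rule integral_rha_adjacent_eq_prefix) simp
  also have "\<dots> = integral\<^sup>L (RHA_P k) (rha_uniform_pair k n \<Phi>)"
    unfolding labels by (rule integral_rha_uniform_pair_eq_prefix[symmetric]) simp
  finally show ?thesis .
qed

lemma set_rha_prefix_pmf: "w \<in> set_pmf (rha_prefix_pmf k M) \<Longrightarrow> i \<le> M \<Longrightarrow> w i \<in> set_pmf (rha_level_pmf k i)"
  unfolding rha_prefix_pmf_def by (auto simp: set_Pi_pmf PiE_dflt_def)

lemma prefix_expectation_mono:
  "(\<And>w. w \<in> set_pmf (rha_prefix_pmf k M) \<Longrightarrow> F w \<le> F' w) \<Longrightarrow> prefix_expectation M F \<le> prefix_expectation M F'"
  by (intro integral_mono_AE AE_pmfI integrable_measure_pmf_finite finite_set_rha_prefix_pmf)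

lemma rha_Y_alphabet:
  assumes "w \<in> set_pmf (rha_prefix_pmf k M)"
  shows "n \<le> M \<Longrightarrow> a \<in> {1..k n} \<Longrightarrow> set (rha_Y k w n a) \<subseteq> {1..k 0}"
proof (induction n arbitrary: a)
  case (Suc n)
  have S: "fst (w (Suc n)) \<in> grid_subsets (k n) (k (Suc n))"
    using set_rha_level_pmf_subset set_rha_prefix_pmf[OF assms Suc.prems(1)] by blast
  then have "rha_enum (k n) (fst (w (Suc n))) ! (a - 1) \<in> {1..k n} \<times> {1..k n}"
    using rha_enum_nth_mem[of "fst (w (Suc n))" "k n" a] Suc.prems(2) by auto
  then show ?case using Suc by (simp add: Let_def mem_Times_iff)
qed simp

lemma rha_label_range:
  assumes "w \<in> set_pmf (rha_prefix_pmf k M)"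
  shows "n + p \<le> M \<Longrightarrow> rha_label k w n p \<in> {1..k n}"
proof (induction p arbitrary: n rule: less_induct)
  case (less p)
  show ?case
  proof (cases "p \<le> 1")
    case True
    have "w n \<in> set_pmf (rha_level_pmf k n)" using set_rha_prefix_pmf[OF assms] less.prems by simp
    from set_rha_level_pmf_choice[OF this] have "snd (w n) \<in> {1..k n}" .
    then show ?thesis using True by (simp add: rha_label_root)
  next
    case False
    then have c: "rha_label k w (Suc n) (p div 2) \<in> {1..k (Suc n)}"
      using less.prems by (intro less.IH) auto
    have "fst (w (Suc n)) \<in> grid_subsets (k n) (k (Suc n))"
      using set_rha_level_pmf_subset set_rha_prefix_pmf[OF assms] less.prems False by simp
    then have "rha_enum (k n) (fst (w (Suc n))) ! (rha_label k w (Suc n) (p div 2) - 1) \<in> {1..k n} \<times> {1..k n}"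
      using rha_enum_nth_mem[of "fst (w (Suc n))" "k n"] c by auto
    then show ?thesis using False by (subst rha_label.simps) (auto simp: Let_def)
  qed
qed

lemma rha_window_alphabet:
  assumes w: "w \<in> set_pmf (rha_prefix_pmf k M)" and i: "2 ^ n \<le> i" and M: "n + i div 2 ^ n + 1 \<le> M"
  shows "set (rha_Xseg k w i (i + 2 ^ n - 1)) \<subseteq> {1..k 0}"
proof -
  let ?p = "i div 2 ^ n"
  have "rha_label k w n ?p \<in> {1..k n}" "rha_label k w n (Suc ?p) \<in> {1..k n}"
    using rha_label_range[OF w] M by auto
  then have "set (rha_Y k w n (rha_label k w n ?p) @ rha_Y k w n (rha_label k w n (Suc ?p))) \<subseteq> {1..k 0}"
    using rha_Y_alphabet[OF w] M by auto
  then show ?thesis unfolding rha_window_eq[OF i]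
    using set_take_subset set_drop_subset by (metis subset_trans)
qed

end

lemma grid_avg_mono:
  "(\<And>a b. a \<in> {1..K} \<Longrightarrow> b \<in> {1..K} \<Longrightarrow> G a b \<le> G' a b) \<Longrightarrow> grid_avg K G \<le> grid_avg K G'"
  unfolding grid_avg_def by (intro divide_right_mono sum_mono) auto

lemma sublist_take_drop: "sublist (take m (drop r xs)) xs"
  using sublist_order.order_trans[OF sublist_take sublist_drop] .

lemma integral_rha_window_eq_adjacent:
  fixes \<psi> :: "nat list \<Rightarrow> real"
  assumes "2 ^ n \<le> i"
  shows "integral\<^sup>L N (\<lambda>w. \<psi> (rha_Xseg k w i (i + 2 ^ n - 1)))
     = integral\<^sup>L N (rha_adjacent k n (i div 2 ^ n) (\<lambda>u v. \<psi> (take (2 ^ n) (drop (i mod 2 ^ n) (u @ v)))))"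
  by (intro Bochner_Integration.integral_cong refl) (simp only: rha_adjacent_def rha_window_eq[OF assms])

lemma integral_rha_window_eq_prefix:
  fixes \<psi> :: "nat list \<Rightarrow> real"
  assumes "2 ^ n \<le> i" "n + i div 2 ^ n + 1 \<le> M"
  shows "integral\<^sup>L (RHA_P k) (\<lambda>w. \<psi> (rha_Xseg k w i (i + 2 ^ n - 1)))
       = measure_pmf.expectation (rha_prefix_pmf k M) (\<lambda>w. \<psi> (rha_Xseg k w i (i + 2 ^ n - 1)))"
  unfolding integral_rha_window_eq_adjacent[OF assms(1)] by (rule integral_rha_adjacent_eq_prefix[OF assms(2)])

lemma integral_rha_Xblock_eq_adjacent:
  fixes \<phi> :: "nat list \<Rightarrow> real"
  shows "1 \<le> j \<Longrightarrow> integral\<^sup>L N (\<lambda>w. \<phi> (rha_Xblock k w n j)) = integral\<^sup>L N (rha_adjacent k n j (\<lambda>u v. \<phi> u))"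
  by (intro Bochner_Integration.integral_cong refl) (simp add: rha_adjacent_def rha_Xblock_eq_label)

lemma integral_rha_Xblock_Suc_eq_adjacent:
  fixes \<phi> :: "nat list \<Rightarrow> real"
  shows "1 \<le> j \<Longrightarrow> integral\<^sup>L N (\<lambda>w. \<phi> (rha_Xblock k w (Suc n) j))
     = integral\<^sup>L N (rha_adjacent k n (2 * j) (\<lambda>u v. \<phi> (u @ v)))"
  by (intro Bochner_Integration.integral_cong refl)
    (simp add: rha_adjacent_def rha_Xblock_eq_label rha_Y_Suc_label del: rha_Y.simps)

context rha_perplexities
begin

lemma integral_rha_window:
  fixes \<psi> :: "nat list \<Rightarrow> real"
  assumes i: "2 ^ n \<le> i"
  shows "integral\<^sup>L (RHA_P k) (\<lambda>w. \<psi> (rha_Xseg k w i (i + 2 ^ n - 1)))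
       = integral\<^sup>L (RHA_P k) (rha_uniform_pair k n (\<lambda>u v. \<psi> (take (2 ^ n) (drop (i mod 2 ^ n) (u @ v)))))"
proof -
  have "1 \<le> i div 2 ^ n" using i by (simp add: div_le_mono[of "2 ^ n" i "2 ^ n", simplified])
  then show ?thesis unfolding integral_rha_window_eq_adjacent[OF i] by (rule integral_rha_adjacent)
qed

lemma integral_rha_window_le_block_above:
  fixes \<phi> :: "nat list \<Rightarrow> real"
  assumes mono: "\<forall>u w. set w \<subseteq> {1..k 0} \<longrightarrow> sublist u w \<longrightarrow> \<phi> u \<le> \<phi> w"
    and i: "2 ^ n \<le> i" and j: "1 \<le> j"
  shows "integral\<^sup>L (RHA_P k) (\<lambda>w. \<phi> (rha_Xseg k w i (i + 2 ^ n - 1)))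
       \<le> integral\<^sup>L (RHA_P k) (\<lambda>w. \<phi> (rha_Xblock k w (Suc n) j))"
proof -
  let ?window = "\<lambda>u v. \<phi> (take (2 ^ n) (drop (i mod 2 ^ n) (u @ v)))"
  have "prefix_expectation n (rha_uniform_pair k n ?window)
      \<le> prefix_expectation n (rha_uniform_pair k n (\<lambda>u v. \<phi> (u @ v)))"
  proof (rule prefix_expectation_mono)
    fix w assume w: "w \<in> set_pmf (rha_prefix_pmf k n)"
    show "rha_uniform_pair k n ?window w \<le> rha_uniform_pair k n (\<lambda>u v. \<phi> (u @ v)) w"
      unfolding rha_uniform_pair_def
    proof (rule grid_avg_mono)
      fix a b assume "a \<in> {1..k n}" "b \<in> {1..k n}"
      then have "set (rha_Y k w n a @ rha_Y k w n b) \<subseteq> {1..k 0}" using rha_Y_alphabet[OF w] by simp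
      then show "?window (rha_Y k w n a) (rha_Y k w n b) \<le> \<phi> (rha_Y k w n a @ rha_Y k w n b)"
        using mono sublist_take_drop by blast
    qed
  qed
  moreover have "1 \<le> 2 * j" using j by simp
  ultimately show ?thesis
    unfolding integral_rha_window[OF i] integral_rha_Xblock_Suc_eq_adjacent[OF j]
      integral_rha_adjacent[OF \<open>1 \<le> 2 * j\<close>]
    by (simp add: integral_rha_uniform_pair_eq_prefix[where M=n])
qed

lemma integral_rha_block_le_window_below:
  fixes \<phi> :: "nat list \<Rightarrow> real"
  assumes mono: "\<forall>u w. set w \<subseteq> {1..k 0} \<longrightarrow> sublist u w \<longrightarrow> \<phi> u \<le> \<phi> w"
    and i: "2 ^ Suc n \<le> i" and j: "1 \<le> j"
  shows "integral\<^sup>L (RHA_P k) (\<lambda>w. \<phi> (rha_Xblock k w n j))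
       \<le> integral\<^sup>L (RHA_P k) (\<lambda>w. \<phi> (rha_Xseg k w i (i + 2 ^ Suc n - 1)))"
proof -
  have "1 \<le> i" using i by (meson le_trans one_le_numeral one_le_power)
  define q where "q = (i + 2 ^ n - 1) div 2 ^ n"
  note window = sublist_rha_Xblock_window[OF \<open>1 \<le> i\<close>, where n=n, folded q_def]
  define M where "M = n + i + 2"
  have M: "n + q + 1 \<le> M" "Suc n + i div 2 ^ Suc n + 1 \<le> M"
    using window(2) div_le_dividend[of i "2 ^ Suc n"] unfolding M_def by linarith+
  have "integral\<^sup>L (RHA_P k) (\<lambda>w. \<phi> (rha_Xblock k w n j)) = integral\<^sup>L (RHA_P k) (rha_adjacent k n q (\<lambda>u v. \<phi> u))"
    unfolding integral_rha_Xblock_eq_adjacent[OF j] integral_rha_adjacent[OF j] integral_rha_adjacent[OF window(1)] ..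
  also have "\<dots> = prefix_expectation M (\<lambda>w. \<phi> (rha_Xblock k w n q))"
    unfolding integral_rha_Xblock_eq_adjacent[OF window(1)] by (rule integral_rha_adjacent_eq_prefix[OF M(1)])
  also have "\<dots> \<le> prefix_expectation M (\<lambda>w. \<phi> (rha_Xseg k w i (i + 2 ^ Suc n - 1)))"
    using mono window(3) rha_window_alphabet[OF _ i M(2)] by (intro prefix_expectation_mono) blast
  also have "\<dots> = integral\<^sup>L (RHA_P k) (\<lambda>w. \<phi> (rha_Xseg k w i (i + 2 ^ Suc n - 1)))"
    by (rule integral_rha_window_eq_prefix[OF i M(2), symmetric])
  finally show ?thesis .
qed

end

section \<open>The stationary mean\<close>

lemma sum_period_eventually_periodic:
  fixes f :: "nat \<Rightarrow> 'a::cancel_comm_monoid_add"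
  assumes m: "1 \<le> m" and periodic: "\<And>i. m \<le> i \<Longrightarrow> f (i + m) = f i" and "m \<le> N"
  shows "(\<Sum>i\<in>{N..<N + m}. f i) = (\<Sum>i\<in>{m..<2 * m}. f i)"
  using \<open>m \<le> N\<close>
proof (induction N rule: dec_induct)
  case (step N)
  have "(\<Sum>i\<in>{N..<N + m}. f i) + f (N + m) = f N + (\<Sum>i\<in>{Suc N..<Suc N + m}. f i)"
    using m by (simp add: sum.atLeast_Suc_lessThan add.commute add.left_commute)
  then have "f N + (\<Sum>i\<in>{Suc N..<Suc N + m}. f i) = f N + (\<Sum>i\<in>{m..<2 * m}. f i)"
    using step.IH periodic[OF step.hyps(1)] by (simp add: add.commute)
  then show ?case by simp
qed (simp add: mult_2)

lemma Cesaro_eventually_periodic: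
  fixes f :: "nat \<Rightarrow> real"
  assumes m: "1 \<le> m" and periodic: "\<And>i. m \<le> i \<Longrightarrow> f (i + m) = f i"
  shows "(\<lambda>N. (\<Sum>i=1..N. f i) / real N) \<longlonglongrightarrow> (\<Sum>i\<in>{m..<2 * m}. f i) / real m"
proof -
  define A where "A = (\<Sum>i\<in>{m..<2 * m}. f i)"
  have period_sum: "(\<Sum>i\<in>{N..<N + m}. f i) = A" if "m \<le> N" for N
    unfolding A_def using sum_period_eventually_periodic[of m f N] m periodic that by blast
  define g where "g N = (\<Sum>i=1..N. f i) - real N * A / real m" for N
  have g_periodic: "g (N + m) = g N" if "m \<le> N + 1" for N
  proof -
    have "{1..N + m} = {1..N} \<union> {N + 1..<N + 1 + m}" "{1..N} \<inter> {N + 1..<N + 1 + m} = {}" by auto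
    then have "(\<Sum>i=1..N + m. f i) = (\<Sum>i=1..N. f i) + A"
      using period_sum[OF that] by (simp add: sum.union_disjoint)
    then show ?thesis unfolding g_def using m by (simp add: field_simps)
  qed
  define B where "B = Max ((\<lambda>N. \<bar>g N\<bar>) ` {..2 * m})"
  have g_bounded: "\<bar>g N\<bar> \<le> B" for N
  proof (induction N rule: less_induct)
    case (less N)
    show ?case
    proof (cases "N \<le> 2 * m")
      case True
      then show ?thesis unfolding B_def by (intro Max_ge) auto
    next
      case False
      then have "g N = g (N - m)" "N - m < N" using g_periodic[of "N - m"] m by simp_all
      then show ?thesis using less.IH by simp
    qed
  qed
  have "(\<lambda>N. (\<Sum>i=1..N. f i) / real N - A / real m) \<longlonglongrightarrow> 0"
  proof (rule Lim_null_comparison)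
    show "\<forall>\<^sub>F N in sequentially. norm ((\<Sum>i=1..N. f i) / real N - A / real m) \<le> B * inverse (real N)"
    proof (rule eventually_sequentiallyI[of 1])
      fix N :: nat assume N: "1 \<le> N"
      then have "(\<Sum>i=1..N. f i) / real N - A / real m = g N * inverse (real N)"
        unfolding g_def using m by (simp add: field_simps)
      then show "norm ((\<Sum>i=1..N. f i) / real N - A / real m) \<le> B * inverse (real N)"
        using g_bounded[of N] N by (simp add: abs_mult mult_right_mono)
    qed
    show "(\<lambda>N. B * inverse (real N)) \<longlonglongrightarrow> 0"
      using tendsto_mult_right_zero[OF lim_inverse_n, of B] by simp
  qed
  then have "(\<lambda>N. (\<Sum>i=1..N. f i) / real N - A / real m + A / real m) \<longlonglongrightarrow> 0 + A / real m"
    by (intro tendsto_add tendsto_const)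
  then show ?thesis unfolding A_def by simp
qed

abbreviation rha_window_prob :: "(nat \<Rightarrow> nat) \<Rightarrow> nat \<Rightarrow> nat list \<Rightarrow> real" where
  "rha_window_prob k i x \<equiv> measure (RHA_P k) {\<omega> \<in> space (RHA_P k). rha_Xseg k \<omega> i (i + length x - 1) = x}"

lemma space_RHA_P: "space (RHA_P k) = UNIV"
  by (simp add: RHA_P_def space_PiM)

lemma rha_window_prob_eq_integral:
  assumes "length x = 2 ^ n"
  shows "rha_window_prob k i x = integral\<^sup>L (RHA_P k) (\<lambda>w. of_bool (rha_Xseg k w i (i + 2 ^ n - 1) = x))"
proof -
  let ?S = "{\<omega> \<in> space (RHA_P k). rha_Xseg k \<omega> i (i + length x - 1) = x}"
  have eq: "integral\<^sup>L (RHA_P k) (\<lambda>w. of_bool (rha_Xseg k w i (i + 2 ^ n - 1) = x)) = integral\<^sup>L (RHA_P k) (indicator ?S)"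
    using assms by (intro Bochner_Integration.integral_cong refl) (simp add: indicator_def space_RHA_P)
  have int: "?S \<inter> space (RHA_P k) = ?S" by auto
  show ?thesis by (simp only: eq Bochner_Integration.integral_indicator int)
qed

context rha_perplexities
begin

lemma rha_mu_eq_period_average:
  assumes x: "length x = 2 ^ n"
  shows "rha_mu k x = (\<Sum>i\<in>{2 ^ n..<2 * 2 ^ n}. rha_window_prob k i x) / 2 ^ n"
proof -
  have "rha_window_prob k (i + 2 ^ n) x = rha_window_prob k i x" if "2 ^ n \<le> i" for i
  proof -
    have "2 ^ n \<le> i + 2 ^ n" by simp
    then show ?thesis unfolding rha_window_prob_eq_integral[OF x]
      using integral_rha_window[where \<psi>="\<lambda>z. of_bool (z = x)", OF that]
        integral_rha_window[where \<psi>="\<lambda>z. of_bool (z = x)", OF \<open>2 ^ n \<le> i + 2 ^ n\<close>] by simp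
  qed
  from Cesaro_eventually_periodic[of "2 ^ n" "\<lambda>i. rha_window_prob k i x", OF _ this]
  show ?thesis unfolding rha_mu_def by (simp add: limI)
qed

lemma sum_rha_window_prob:
  fixes \<phi> :: "nat list \<Rightarrow> real"
  assumes i: "2 ^ n \<le> i"
  shows "(\<Sum>x\<in>{x. length x = 2 ^ n \<and> set x \<subseteq> {1..k 0}}. rha_window_prob k i x * \<phi> x)
       = integral\<^sup>L (RHA_P k) (\<lambda>w. \<phi> (rha_Xseg k w i (i + 2 ^ n - 1)))"
proof -
  let ?X = "{x. length x = 2 ^ n \<and> set x \<subseteq> {1..k 0}}"
  let ?W = "\<lambda>w. rha_Xseg k w i (i + 2 ^ n - 1)"
  define M where "M = n + i + 1"
  have M: "n + i div 2 ^ n + 1 \<le> M" unfolding M_def by (simp add: div_le_dividend)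
  have "1 \<le> i" using i by (meson le_trans one_le_numeral one_le_power)
  have finX: "finite ?X" using finite_lists_length_eq[of "{1..k 0}" "2 ^ n"] by (simp add: conj_commute)
  have "(\<Sum>x\<in>?X. rha_window_prob k i x * \<phi> x) = (\<Sum>x\<in>?X. prefix_expectation M (\<lambda>w. of_bool (?W w = x)) * \<phi> x)"
  proof (rule sum.cong[OF refl])
    fix x assume "x \<in> ?X"
    then have "rha_window_prob k i x = integral\<^sup>L (RHA_P k) (\<lambda>w. of_bool (?W w = x))"
      by (intro rha_window_prob_eq_integral) simp
    also have "\<dots> = prefix_expectation M (\<lambda>w. of_bool (?W w = x))"
      by (rule integral_rha_window_eq_prefix[OF i M])
    finally show "rha_window_prob k i x * \<phi> x = prefix_expectation M (\<lambda>w. of_bool (?W w = x)) * \<phi> x"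
      by simp
  qed
  also have "\<dots> = prefix_expectation M (\<lambda>w. \<Sum>x\<in>?X. of_bool (?W w = x) * \<phi> x)"
    by (subst Bochner_Integration.integral_sum)
      (simp_all add: integrable_measure_pmf_finite[OF finite_set_rha_prefix_pmf])
  also have "\<dots> = prefix_expectation M (\<lambda>w. \<phi> (?W w))"
  proof (rule expectation_pmf_cong)
    fix w assume "w \<in> set_pmf (rha_prefix_pmf k M)"
    then have "?W w \<in> ?X" using length_rha_window[OF \<open>1 \<le> i\<close>] rha_window_alphabet[OF _ i M] by simp
    have "(\<Sum>x\<in>?X. of_bool (?W w = x) * \<phi> x) = (\<Sum>x\<in>?X. if x = ?W w then \<phi> x else 0)"
      by (intro sum.cong) auto
    also have "\<dots> = \<phi> (?W w)" using finX \<open>?W w \<in> ?X\<close> by (simp only: sum.delta if_True)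
    finally show "(\<Sum>x\<in>?X. of_bool (?W w = x) * \<phi> x) = \<phi> (?W w)" .
  qed
  also have "\<dots> = integral\<^sup>L (RHA_P k) (\<lambda>w. \<phi> (?W w))"
    by (rule integral_rha_window_eq_prefix[OF i M, symmetric])
  finally show ?thesis .
qed

lemma rha_mu_expect_eq_window_average:
  fixes \<phi> :: "nat list \<Rightarrow> real"
  shows "rha_mu_expect k (2 ^ n) \<phi>
       = (\<Sum>i\<in>{2 ^ n..<2 * 2 ^ n}. integral\<^sup>L (RHA_P k) (\<lambda>w. \<phi> (rha_Xseg k w i (i + 2 ^ n - 1)))) / 2 ^ n"
proof -
  let ?X = "{x. length x = 2 ^ n \<and> set x \<subseteq> {1..k 0}}"
  have "rha_mu_expect k (2 ^ n) \<phi> = (\<Sum>x\<in>?X. (\<Sum>i\<in>{2 ^ n..<2 * 2 ^ n}. rha_window_prob k i x * \<phi> x) / 2 ^ n)"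
    unfolding rha_mu_expect_def
    by (intro sum.cong refl) (simp add: rha_mu_eq_period_average sum_distrib_right)
  also have "\<dots> = (\<Sum>x\<in>?X. \<Sum>i\<in>{2 ^ n..<2 * 2 ^ n}. rha_window_prob k i x * \<phi> x) / 2 ^ n"
    by (rule sum_divide_distrib[symmetric])
  also have "\<dots> = (\<Sum>i\<in>{2 ^ n..<2 * 2 ^ n}. \<Sum>x\<in>?X. rha_window_prob k i x * \<phi> x) / 2 ^ n"
    by (subst sum.swap) (rule refl)
  also have "\<dots> = (\<Sum>i\<in>{2 ^ n..<2 * 2 ^ n}. integral\<^sup>L (RHA_P k) (\<lambda>w. \<phi> (rha_Xseg k w i (i + 2 ^ n - 1)))) / 2 ^ n"
    by (intro arg_cong[where f="\<lambda>t. t / 2 ^ n"] sum.cong refl sum_rha_window_prob) simp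
  finally show ?thesis .
qed

end

theorem proposition3:
  fixes k :: "nat \<Rightarrow> nat" and \<phi> :: "nat list \<Rightarrow> real" and n j :: nat
  assumes "\<forall>i. 0 < k i"
    and "\<forall>i\<ge>1. k (i - 1) \<le> k i \<and> k i \<le> (k (i - 1))\<^sup>2"
    and "\<forall>u w. set w \<subseteq> {1..k 0} \<longrightarrow> sublist u w \<longrightarrow> \<phi> u \<le> \<phi> w"
    and "n \<ge> 1" and "j \<ge> 1"
  shows "(\<integral>\<omega>. \<phi> (rha_Xblock k \<omega> (n - 1) j) \<partial>RHA_P k) \<le> rha_mu_expect k (2 ^ n) \<phi>
       \<and> rha_mu_expect k (2 ^ n) \<phi> \<le> (\<integral>\<omega>. \<phi> (rha_Xblock k \<omega> (n + 1) j) \<partial>RHA_P k)"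
proof -
  \<comment> \<open>only \<open>0 < k\<^sub>i\<close> and \<open>k\<^sub>i \<le> k\<^sub>i\<^sub>-\<^sub>1\<^sup>2\<close> are needed\<close>
  interpret rha_perplexities k
    using assms(1,2) by unfold_locales (auto simp: power2_eq_square dest: spec[of _ "Suc _"])
  obtain m where n: "n = Suc m" using assms(4) by (cases n) auto
  let ?L = "\<integral>\<omega>. \<phi> (rha_Xblock k \<omega> (n - 1) j) \<partial>RHA_P k"
  let ?U = "\<integral>\<omega>. \<phi> (rha_Xblock k \<omega> (n + 1) j) \<partial>RHA_P k"
  let ?e = "\<lambda>i. \<integral>\<omega>. \<phi> (rha_Xseg k \<omega> i (i + 2 ^ n - 1)) \<partial>RHA_P k"
  have bounds: "?L \<le> ?e i \<and> ?e i \<le> ?U" if "i \<in> {2 ^ n..<2 * 2 ^ n}" for i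
    using integral_rha_block_le_window_below[OF assms(3), of m i j]
      integral_rha_window_le_block_above[OF assms(3), of n i j] that assms(5) n by simp
  have "real (2 ^ n) * ?L \<le> (\<Sum>i\<in>{2 ^ n..<2 * 2 ^ n}. ?e i)"
    using sum_bounded_below[of "{2 ^ n..<2 * 2 ^ n}" ?L ?e] bounds by simp
  moreover have "(\<Sum>i\<in>{2 ^ n..<2 * 2 ^ n}. ?e i) \<le> real (2 ^ n) * ?U"
    using sum_bounded_above[of "{2 ^ n..<2 * 2 ^ n}" ?e ?U] bounds by simp
  ultimately show ?thesis
    unfolding rha_mu_expect_eq_window_average by (simp add: field_simps)
qed

end
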